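(* Let $\mathcal{X},\mathcal{Y}$ be separable Hilbert spaces and $K:\mathcal{X}\to\mathcal{Y}$ a compact linear operator with Moore–Penrose inverse $K^+$. Let $Y_1,Y_2,\dots$ be i.i.d. $\mathcal{Y}$-valued random variables with $\mathbb{E}[Y_1]=\hat y\in\mathcal{D}(K^+)$ and $0<\mathbb{E}\|Y_1\|^2<\infty$. Let $R_\alpha:=F_\alpha(K^*K)K^*$, where $(F_\alpha)_{\alpha>0}$ is a regularising filter of qualification $\nu_0$ in the sense of the context. Set $\bar Y_n:=\frac1n\sum_{i\le n}Y_i$ and $\delta_n^{est}:=n^{-1/2}$. Assume that for some $0<\nu\le\nu_0$ and $\rho>0$ one has $K^+\hat y=(K^*K)^{\nu/2}w$ for some $w\in\mathcal{X}$ with $\|w\|\le\rho$. Let $\alpha(\cdot)$ be a parameter choice such that, for constants $0<c\le C$, $$c\Big(\frac{\delta_n^{est}}{\rho}\Big)^{\frac{2}{\nu+1}}\le\alpha(\delta_n^{est})\le C\Big(\frac{\delta_n^{est}}{\rho}\Big)^{\frac{2}{\nu+1}}\quad\text{for all }n.$$ Then there is a constant $C'$ (independent of $n$) such that $$\sqrt{\mathbb{E}\big\|R_{\alpha(\delta_n^{est})}\bar Y_n-K^+\hat y\big\|^2}\le C'\,(\delta_n^{est})^{\frac{\nu}{\nu+1}}\rho^{\frac{1}{\nu+1}}=\mathcal{O}\big(n^{-\frac{\nu}{2(\nu+1)}}\big).$$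
   Context: A regularising filter of qualification $\nu_0\in(0,\infty]$ is a family $(F_\alpha)_{\alpha>0}$ of bounded real-valued functions on $(0,\|K\|^2]$ such that: $\lim_{\alpha\to0}F_\alpha(\lambda)=1/\lambda$ for each $\lambda$; there is $C_R>0$ with $\lambda F_\alpha(\lambda)<C_R$ for all $\alpha>0$, $\lambda\in(0,\|K\|^2]$; $\nu_0$ is maximal such that for every $\nu\in(0,\nu_0]$ there is $C_\nu>0$ with $\sup_{\lambda\in(0,\|K\|^2]}\lambda^{\nu/2}|1-\lambda F_\alpha(\lambda)|\le C_\nu\alpha^{\nu/2}$ for all $\alpha>0$; and there is $C_F>0$ with $|F_\alpha(\lambda)|\le C_F/\alpha$ for all $\alpha>0$, $0<\lambda\le\|K\|^2$. $F_\alpha(K^*K)$ is defined by functional calculus. *)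

theory Defs
  imports "HOL-Probability.Probability"
begin

definition compact_op :: "('a::real_normed_vector \<Rightarrow> 'b::real_normed_vector) \<Rightarrow> bool" where
  "compact_op K \<longleftrightarrow> bounded_linear K \<and> compact (closure (K ` ball 0 1))"

definition orth_compl :: "'a::real_inner set \<Rightarrow> 'a set" where
  "orth_compl S = {z. \<forall>v\<in>S. inner z v = 0}"

definition mp_domain :: "('a::real_inner \<Rightarrow> 'b::real_inner) \<Rightarrow> 'b set" where
  "mp_domain K = {y. \<exists>x0 z. y = K x0 + z \<and> z \<in> orth_compl (range K)}"

definition mp_inverse :: "('a::real_inner \<Rightarrow> 'b::real_inner) \<Rightarrow> 'b \<Rightarrow> 'a" where
  "mp_inverse K y = (THE x. x \<in> orth_compl {v. K v = 0} \<and>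
       (\<exists>z \<in> orth_compl (range K). y = K x + z))"

definition fun_calc :: "(real \<Rightarrow> real) \<Rightarrow> ('a::real_inner \<Rightarrow> 'a) \<Rightarrow> 'a \<Rightarrow> 'a" where
  "fun_calc f A = (THE T. bounded_linear T \<and>
       (\<forall>x l. 0 < l \<longrightarrow> A x = l *\<^sub>R x \<longrightarrow> T x = f l *\<^sub>R x) \<and>
       (\<forall>x. A x = 0 \<longrightarrow> T x = 0))"

definition filter_estimate :: "(real \<Rightarrow> real \<Rightarrow> real) \<Rightarrow> real \<Rightarrow> real \<Rightarrow> bool" where
  "filter_estimate F L \<nu> \<longleftrightarrow> (\<exists>C\<^sub>\<nu>>0. \<forall>\<alpha>>0.
      \<forall>l\<in>{0<..L}. l powr (\<nu>/2) * \<bar>1 - l * F \<alpha> l\<bar> \<le> C\<^sub>\<nu> * \<alpha> powr (\<nu>/2))"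

text \<open>Regularising filter (F alpha lambda = F_alpha(lambda)) on (0, L] with qualification nu0.\<close>
definition regularising_filter :: "(real \<Rightarrow> real \<Rightarrow> real) \<Rightarrow> real \<Rightarrow> ereal \<Rightarrow> bool" where
  "regularising_filter F L \<nu>\<^sub>0 \<longleftrightarrow>
     0 < \<nu>\<^sub>0 \<and>
     (\<forall>\<alpha>>0. \<exists>B. \<forall>l\<in>{0<..L}. \<bar>F \<alpha> l\<bar> \<le> B) \<and>
     (\<forall>l\<in>{0<..L}. ((\<lambda>\<alpha>. F \<alpha> l) \<longlongrightarrow> 1 / l) (at_right 0)) \<and>
     (\<exists>C\<^sub>R>0. \<forall>\<alpha>>0. \<forall>l\<in>{0<..L}. l * F \<alpha> l < C\<^sub>R) \<and>
     (\<forall>\<nu>. 0 < \<nu> \<and> ereal \<nu> \<le> \<nu>\<^sub>0 \<longrightarrow> filter_estimate F L \<nu>) \<and>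
     (\<forall>\<nu>\<^sub>1. \<nu>\<^sub>0 < \<nu>\<^sub>1 \<longrightarrow> \<not> (\<forall>\<nu>. 0 < \<nu> \<and> ereal \<nu> \<le> \<nu>\<^sub>1 \<longrightarrow> filter_estimate F L \<nu>)) \<and>
     (\<exists>C\<^sub>F>0. \<forall>\<alpha>>0. \<forall>l\<in>{0<..L}. \<bar>F \<alpha> l\<bar> \<le> C\<^sub>F / \<alpha>)"

end

(* The error of the regularised estimator splits as
     R_alpha Y_n - K^+ yhat = R_alpha (Y_n - yhat) + (R_alpha yhat - K^+ yhat),
   a data error and an approximation error.  Both are controlled through the spectral
   calculus of the compact self-adjoint operator K*K: F_alpha(K*K) is the orthogonal series
   of F_alpha(lambda) times the eigenprojections, and a vector orthogonal to all eigenspaces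
   lies in the kernel of K*K (the variational argument: the supremum of the Rayleigh
   quotient on an invariant subspace is attained by compactness).  The filter bounds give
   ||R_alpha|| <= sqrt (C / alpha), and with the source condition K^+ yhat = (K*K)^(nu/2) w
   the approximation error is at most C' alpha^(nu/2) rho.  For i.i.d. samples
   E ||Y_n - yhat||^2 = sigma^2 / n, so the mean-square error is at most
   C delta^2 / alpha + C' alpha^nu rho^2 with delta = n^(-1/2), and the a priori choice
   alpha ~ (delta / rho)^(2/(nu+1)) balances the two terms to order
   delta^(2 nu/(nu+1)) rho^(2/(nu+1)). *)

theory Submission
  imports Defs
begin

section \<open>Orthogonal projections and adjoints\<close>

lemma convex_minimizing_sequence_Cauchy:
  fixes S :: "'a::real_inner set"
  assumes "convex S" and s_in: "\<And>n. s n \<in> S" and d_le: "\<And>t. t \<in> S \<Longrightarrow> d \<le> norm (x - t)" "0 \<le> d"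
    and s_close: "\<And>n. norm (x - s n) ^ 2 < d ^ 2 + 1 / Suc n"
  shows "Cauchy s"
proof (rule metric_CauchyI)
  \<comment> \<open>Parallelogram law, applied to x - s n and x - s m, with the midpoint of s n and s m in S.\<close>
  have s_near: "norm (s n - s m) ^ 2 \<le> 2 / Suc n + 2 / Suc m" for n m
  proof -
    have "(1/2) *\<^sub>R s n + (1/2) *\<^sub>R s m \<in> S"
      using assms(1) s_in by (intro convexD) auto
    then have "d ^ 2 \<le> norm (x - ((1/2) *\<^sub>R s n + (1/2) *\<^sub>R s m)) ^ 2"
      using d_le by (intro power_mono) auto
    moreover have "norm (s n - s m) ^ 2 = 2 * norm (x - s n) ^ 2 + 2 * norm (x - s m) ^ 2
        - 4 * norm (x - ((1/2) *\<^sub>R s n + (1/2) *\<^sub>R s m)) ^ 2"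
      unfolding power2_norm_eq_inner by (simp add: inner_commute algebra_simps)
    ultimately show ?thesis
      using s_close[of n] s_close[of m] by linarith
  qed
  fix e :: real
  assume "e > 0"
  then obtain N :: nat where N: "4 / e ^ 2 < N" "N > 0"
    by (metis reals_Archimedean2 of_nat_0_less_iff order.strict_trans zero_less_divide_iff
        zero_less_numeral zero_less_power)
  have "dist (s m) (s n) < e" if "N \<le> m" "N \<le> n" for m n
  proof -
    have "2 / Suc m \<le> 2 / N" "2 / Suc n \<le> 2 / N"
      using that N by (auto intro!: divide_left_mono)
    moreover have "4 / N < e ^ 2"
      using N \<open>e > 0\<close> by (simp add: field_simps)
    ultimately have "norm (s m - s n) ^ 2 < e ^ 2"
      using s_near[of m n] by linarith
    then show ?thesis
      using \<open>e > 0\<close> by (simp add: dist_norm power_less_imp_less_base)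
  qed
  then show "\<exists>M. \<forall>m\<ge>M. \<forall>n\<ge>M. dist (s m) (s n) < e"
    by blast
qed

lemma closed_convex_best_approximation:
  fixes S :: "'a::{real_inner,complete_space} set"
  assumes "convex S" "closed S" "S \<noteq> {}"
  obtains p where "p \<in> S" "\<And>t. t \<in> S \<Longrightarrow> norm (x - p) \<le> norm (x - t)"
proof -
  define d where "d = infdist x S"
  have d_le: "d \<le> norm (x - t)" if "t \<in> S" for t
    using infdist_le[OF that, of x] by (simp add: d_def dist_norm)
  have "\<exists>s\<in>S. norm (x - s) ^ 2 < d ^ 2 + 1 / Suc n" for n
  proof -
    have "infdist x S < sqrt (d ^ 2 + 1 / Suc n)"
      using infdist_nonneg by (auto simp: d_def intro!: real_less_rsqrt)
    then obtain s where "s \<in> S" "norm (x - s) < sqrt (d ^ 2 + 1 / Suc n)"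
      using cInf_lessD[of "dist x ` S"] assms(3) by (auto simp: infdist_notempty dist_norm)
    moreover have "sqrt (d ^ 2 + 1 / Suc n) ^ 2 = d ^ 2 + 1 / Suc n"
      by simp
    ultimately show ?thesis
      by (metis norm_ge_zero power_strict_mono zero_less_numeral)
  qed
  then obtain s where s_in: "\<And>n. s n \<in> S" and s_close: "\<And>n. norm (x - s n) ^ 2 < d ^ 2 + 1 / Suc n"
    by metis
  have "0 \<le> d"
    by (simp add: d_def infdist_nonneg)
  have "Cauchy s"
    by (rule convex_minimizing_sequence_Cauchy[OF assms(1) s_in d_le \<open>0 \<le> d\<close> s_close])
  then obtain p where lim: "s \<longlonglongrightarrow> p"
    using Cauchy_convergent_iff convergent_def by blast
  have "norm (x - p) \<le> d"
  proof (rule tendsto_le[OF _ _ tendsto_norm[OF tendsto_diff[OF tendsto_const lim]]])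
    show "(\<lambda>n. sqrt (d ^ 2 + 1 / real (Suc n))) \<longlonglongrightarrow> d"
      using tendsto_real_sqrt[OF tendsto_add[OF tendsto_const[of "d ^ 2"] LIMSEQ_Suc[OF lim_inverse_n']]]
        infdist_nonneg[of x S] by (simp add: d_def)
    show "\<forall>\<^sub>F n in sequentially. norm (x - s n) \<le> sqrt (d ^ 2 + 1 / real (Suc n))"
      using s_close by (intro always_eventually allI real_le_rsqrt less_imp_le) auto
  qed simp
  moreover have "p \<in> S"
    using assms(2) s_in lim closed_sequentially by blast
  ultimately show thesis
    using d_le by (meson order_trans that)
qed

lemma best_approximation_orthogonal:
  fixes S :: "'a::real_inner set"
  assumes "subspace S" "p \<in> S" "t \<in> S"
    and best: "\<And>u. u \<in> S \<Longrightarrow> norm (x - p) \<le> norm (x - u)"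
  shows "inner (x - p) t = 0"
proof (cases "t = 0")
  case False
  define a where "a = inner (x - p) t"
  define N where "N = inner t t"
  have "N > 0"
    using False by (simp add: N_def)
  \<comment> \<open>The competitor p + (a / N) t, i.e. one step of the line search along t.\<close>
  have expand: "norm (v - c *\<^sub>R t) ^ 2 = norm v ^ 2 - 2 * c * inner v t + c ^ 2 * inner t t"
    for v and c :: real
    unfolding power2_norm_eq_inner
    by (simp add: inner_diff_left inner_diff_right inner_commute power2_eq_square)
  have "p + (a / N) *\<^sub>R t \<in> S"
    using assms by (intro subspace_add subspace_mul) auto
  then have "norm (x - p) ^ 2 \<le> norm ((x - p) - (a / N) *\<^sub>R t) ^ 2"
    using best[of "p + (a / N) *\<^sub>R t"] by (simp add: diff_diff_eq power_mono)
  also have "\<dots> = norm (x - p) ^ 2 - a ^ 2 / N"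
    unfolding expand a_def[symmetric] N_def[symmetric]
    using \<open>N > 0\<close> by (simp add: field_simps power2_eq_square)
  finally have "a ^ 2 / N \<le> 0"
    by simp
  then show ?thesis
    using \<open>N > 0\<close> by (simp add: a_def divide_le_0_iff)
qed simp

definition orthogonal_projection :: "'a::real_inner set \<Rightarrow> 'a \<Rightarrow> 'a" where
  "orthogonal_projection S x = (SOME p. p \<in> S \<and> (\<forall>s\<in>S. inner (x - p) s = 0))"

context
  fixes S :: "'a::{real_inner,complete_space} set"
  assumes subspace: "subspace S" and closed: "closed S"
begin

lemma orthogonal_projection_props:
  "orthogonal_projection S x \<in> S \<and> (\<forall>s\<in>S. inner (x - orthogonal_projection S x) s = 0)"
proof -
  have "convex S" "S \<noteq> {}"
    using subspace_imp_convex[OF subspace] subspace_0[OF subspace] by auto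
  then obtain p where "p \<in> S" "\<And>t. t \<in> S \<Longrightarrow> norm (x - p) \<le> norm (x - t)"
    using closed_convex_best_approximation[OF _ closed] by blast
  then have "\<exists>p. p \<in> S \<and> (\<forall>s\<in>S. inner (x - p) s = 0)"
    using best_approximation_orthogonal[OF subspace] by blast
  then show ?thesis
    unfolding orthogonal_projection_def by (rule someI_ex)
qed

lemma orthogonal_projection_in: "orthogonal_projection S x \<in> S"
  using orthogonal_projection_props by blast

lemma orthogonal_projection_orthogonal:
  "s \<in> S \<Longrightarrow> inner (x - orthogonal_projection S x) s = 0"
  using orthogonal_projection_props by blast

lemma orthogonal_projection_unique:
  assumes "p \<in> S" "\<And>s. s \<in> S \<Longrightarrow> inner (x - p) s = 0"
  shows "orthogonal_projection S x = p"
proof -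
  let ?q = "orthogonal_projection S x"
  have "?q - p \<in> S"
    using orthogonal_projection_in assms(1) subspace by (simp add: subspace_diff)
  then have "inner (x - p) (?q - p) - inner (x - ?q) (?q - p) = 0"
    using assms(2) orthogonal_projection_orthogonal by simp
  then have "inner (?q - p) (?q - p) = 0"
    by (simp add: inner_diff_left inner_commute)
  then show ?thesis
    by simp
qed

lemma orthogonal_projection_id: "e \<in> S \<Longrightarrow> orthogonal_projection S e = e"
  by (rule orthogonal_projection_unique) auto

lemma orthogonal_projection_orthogonal_vector:
  "e \<in> S' \<Longrightarrow> (\<And>s. s \<in> S \<Longrightarrow> inner e s = 0) \<Longrightarrow> orthogonal_projection S e = 0"
  by (rule orthogonal_projection_unique) (auto simp: subspace_0[OF subspace])

lemma orthogonal_projection_self_adjoint: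
  "inner (orthogonal_projection S a) b = inner a (orthogonal_projection S b)"
proof -
  let ?P = "orthogonal_projection S"
  have "inner (?P a) b = inner (?P a) (?P b)"
    using orthogonal_projection_orthogonal[OF orthogonal_projection_in, of b a]
    by (simp add: inner_diff_left inner_diff_right inner_commute)
  also have "\<dots> = inner a (?P b)"
    using orthogonal_projection_orthogonal[OF orthogonal_projection_in, of a b]
    by (simp add: inner_diff_left)
  finally show ?thesis .
qed

lemma bounded_linear_orthogonal_projection: "bounded_linear (orthogonal_projection S)"
proof (rule bounded_linear_intro[where K=1])
  let ?P = "orthogonal_projection S"
  show "?P (x + y) = ?P x + ?P y" for x y
  proof (rule orthogonal_projection_unique)
    show "?P x + ?P y \<in> S"
      using orthogonal_projection_in subspace by (simp add: subspace_add)
    show "inner (x + y - (?P x + ?P y)) s = 0" if "s \<in> S" for s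
      using orthogonal_projection_orthogonal[OF that, of x] orthogonal_projection_orthogonal[OF that, of y]
      by (simp add: inner_diff_left inner_add_left)
  qed
  show "?P (r *\<^sub>R x) = r *\<^sub>R ?P x" for r x
  proof (rule orthogonal_projection_unique)
    show "r *\<^sub>R ?P x \<in> S"
      using orthogonal_projection_in subspace by (simp add: subspace_mul)
    show "inner (r *\<^sub>R x - r *\<^sub>R ?P x) s = 0" if "s \<in> S" for s
      using orthogonal_projection_orthogonal[OF that, of x] by (simp add: inner_diff_left)
  qed
  show "norm (?P x) \<le> norm x * 1" for x
  proof -
    have "orthogonal (x - ?P x) (?P x)"
      by (simp add: orthogonal_def orthogonal_projection_orthogonal orthogonal_projection_in)
    then have "norm x ^ 2 = norm (x - ?P x) ^ 2 + norm (?P x) ^ 2"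
      using norm_add_Pythagorean[of "x - ?P x" "?P x"] by simp
    then show ?thesis
      by (simp add: power2_le_imp_le)
  qed
qed

end

lemma riesz_representation:
  fixes \<phi> :: "'a::{real_inner,complete_space} \<Rightarrow> real"
  assumes "bounded_linear \<phi>"
  obtains u where "\<And>x. \<phi> x = inner x u"
proof (cases "\<forall>x. \<phi> x = 0")
  case False
  then obtain x0 where x0: "\<phi> x0 \<noteq> 0"
    by blast
  interpret bounded_linear \<phi> by fact
  define N where "N = {x. \<phi> x = 0}"
  have "subspace N"
    unfolding N_def subspace_def by (auto simp: add scale)
  moreover have "closed N"
    unfolding N_def by (intro closed_Collect_eq continuous_on_const linear_continuous_on assms)
  ultimately have orth: "s \<in> N \<Longrightarrow> inner (x0 - orthogonal_projection N x0) s = 0"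
    and proj_in: "orthogonal_projection N x0 \<in> N" for s
    by (auto intro: orthogonal_projection_orthogonal orthogonal_projection_in)
  \<comment> \<open>z spans the orthogonal complement of the kernel N\<close>
  define z where "z = x0 - orthogonal_projection N x0"
  have "\<phi> z \<noteq> 0"
    using x0 proj_in by (simp add: z_def N_def diff)
  then have "inner z z \<noteq> 0"
    by auto
  have orth_z: "s \<in> N \<Longrightarrow> inner z s = 0" for s
    unfolding z_def by (rule orth)
  have "\<phi> x = inner x ((\<phi> z / inner z z) *\<^sub>R z)" for x
  proof -
    have "\<phi> x *\<^sub>R z - \<phi> z *\<^sub>R x \<in> N"
      by (simp add: N_def diff scale)
    then have "inner z (\<phi> x *\<^sub>R z - \<phi> z *\<^sub>R x) = 0"
      by (rule orth_z)
    then have "\<phi> x * inner z z = \<phi> z * inner z x"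
      by (simp add: inner_diff_right)
    then show ?thesis
      using \<open>inner z z \<noteq> 0\<close> by (simp add: inner_commute field_simps)
  qed
  then show thesis
    by (rule that)
qed (use that[of 0] in auto)

lemma bounded_linear_adjoint_works:
  fixes K :: "'a::{real_inner,complete_space} \<Rightarrow> 'b::real_inner"
  assumes "bounded_linear K"
  shows "inner (K x) y = inner x (adjoint K y)"
proof -
  have "\<exists>u. \<forall>x. inner (K x) y = inner x u" for y
    using riesz_representation[OF bounded_linear_compose[OF bounded_linear_inner_left assms]]
    by metis
  then have "\<exists>K'. \<forall>x y. inner (K x) y = inner x (K' y)"
    by metis
  then show ?thesis
    unfolding adjoint_def by (rule someI_ex[where P="\<lambda>K'. \<forall>x y. inner (K x) y = inner x (K' y)",
          THEN spec, THEN spec])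
qed

lemma bounded_linear_adjoint:
  fixes K :: "'a::{real_inner,complete_space} \<Rightarrow> 'b::real_inner"
  assumes "bounded_linear K"
  shows "bounded_linear (adjoint K)"
proof (rule bounded_linear_intro[where K="onorm K"])
  note adj = bounded_linear_adjoint_works[OF assms]
  have inner_eqI: "(\<And>x. inner x a = inner x b) \<Longrightarrow> a = b" for a b :: 'a
    by (metis inner_diff_right inner_eq_zero_iff right_minus_eq)
  show "adjoint K (x + y) = adjoint K x + adjoint K y" for x y
    by (rule inner_eqI) (simp add: adj[symmetric] inner_add_right)
  show "adjoint K (r *\<^sub>R x) = r *\<^sub>R adjoint K x" for r x
    by (rule inner_eqI) (simp add: adj[symmetric])
  show "norm (adjoint K y) \<le> norm y * onorm K" for y
  proof -
    have "norm (adjoint K y) ^ 2 = inner (K (adjoint K y)) y"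
      by (simp add: adj power2_norm_eq_inner)
    also have "\<dots> \<le> norm (K (adjoint K y)) * norm y"
      by (rule norm_cauchy_schwarz)
    also have "\<dots> \<le> onorm K * norm (adjoint K y) * norm y"
      by (intro mult_right_mono onorm[OF assms]) auto
    finally have "norm (adjoint K y) * norm (adjoint K y) \<le> (norm y * onorm K) * norm (adjoint K y)"
      by (simp add: power2_eq_square algebra_simps)
    then show ?thesis
      using onorm_pos_le[OF assms] by (cases "adjoint K y = 0") (auto simp: mult_le_cancel_right)
  qed
qed

section \<open>Orthogonal series\<close>

lemma summable_on_if_small_tails:
  fixes f :: "'i \<Rightarrow> 'a::{real_normed_vector,complete_space}"
  assumes tails: "\<And>e. e > 0 \<Longrightarrow>
      \<exists>F0. finite F0 \<and> F0 \<subseteq> A \<and> (\<forall>G. finite G \<and> G \<subseteq> A - F0 \<longrightarrow> norm (sum f G) < e)"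
  shows "f summable_on A"
proof -
  have "\<exists>P. eventually P (finite_subsets_at_top A) \<and>
      (\<forall>F1 F2. P F1 \<and> P F2 \<longrightarrow> dist (sum f F1) (sum f F2) < e)" if "e > 0" for e
  proof -
    obtain F0 where F0: "finite F0" "F0 \<subseteq> A"
      and small: "\<And>G. finite G \<Longrightarrow> G \<subseteq> A - F0 \<Longrightarrow> norm (sum f G) < e / 2"
      using tails[of "e / 2"] \<open>e > 0\<close> by auto
    define P where "P F \<longleftrightarrow> finite F \<and> F0 \<subseteq> F \<and> F \<subseteq> A" for F
    have "eventually P (finite_subsets_at_top A)"
      unfolding P_def eventually_finite_subsets_at_top using F0 by blast
    moreover have "dist (sum f F1) (sum f F2) < e" if "P F1" "P F2" for F1 F2
    proof -
      have split: "sum f F = sum f (F - F0) + sum f F0" if "P F" for F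
        using that by (auto simp: P_def intro: sum.subset_diff)
      have "dist (sum f F1) (sum f F2) \<le> norm (sum f (F1 - F0)) + norm (sum f (F2 - F0))"
        using split[OF \<open>P F1\<close>] split[OF \<open>P F2\<close>] norm_triangle_ineq4 by (simp add: dist_norm)
      also have "\<dots> < e / 2 + e / 2"
        using that by (intro add_strict_mono small) (auto simp: P_def)
      finally show ?thesis
        by simp
    qed
    ultimately show ?thesis
      by blast
  qed
  then have "cauchy_filter (filtermap (sum f) (finite_subsets_at_top A))"
    by (simp add: cauchy_filter_metric_filtermap)
  then obtain L where "filtermap (sum f) (finite_subsets_at_top A) \<le> nhds L"
    using cauchy_filter_convergent convergent_filter_iff by blast
  then show ?thesis
    unfolding summable_on_def has_sum_def filterlim_def by blast
qed

lemma orthogonal_family_summable_on: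
  fixes f :: "'i \<Rightarrow> 'a::{real_inner,complete_space}"
  assumes sq: "(\<lambda>i. norm (f i) ^ 2) summable_on A"
    and orth: "pairwise (\<lambda>i j. orthogonal (f i) (f j)) A"
  shows "f summable_on A"
proof (rule summable_on_if_small_tails)
  fix e :: real
  assume "e > 0"
  define T where "T = (\<Sum>\<^sub>\<infinity>i\<in>A. norm (f i) ^ 2)"
  obtain F0 where F0: "finite F0" "F0 \<subseteq> A" and "dist (\<Sum>i\<in>F0. norm (f i) ^ 2) T \<le> e ^ 2 / 2"
    using infsum_finite_approximation[OF sq, of "e ^ 2 / 2"] \<open>e > 0\<close> by (auto simp: T_def)
  then have F0_close: "T - (\<Sum>i\<in>F0. norm (f i) ^ 2) \<le> e ^ 2 / 2"
    unfolding dist_real_def by linarith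
  have "norm (sum f G) < e" if G: "finite G" "G \<subseteq> A - F0" for G
  proof -
    have "(\<Sum>i\<in>F0. norm (f i) ^ 2) + (\<Sum>i\<in>G. norm (f i) ^ 2) = (\<Sum>i\<in>F0 \<union> G. norm (f i) ^ 2)"
      using G F0 by (subst sum.union_disjoint) auto
    also have "\<dots> \<le> T"
      unfolding T_def using G F0 by (intro finite_sum_le_infsum sq) auto
    moreover have "norm (sum f G) ^ 2 = (\<Sum>i\<in>G. norm (f i) ^ 2)"
      using G by (intro norm_sum_Pythagorean pairwise_subset[OF orth]) auto
    ultimately have "norm (sum f G) ^ 2 \<le> e ^ 2 / 2"
      using F0_close by linarith
    also have "\<dots> < e ^ 2"
      using \<open>e > 0\<close> by simp
    finally show ?thesis
      using \<open>e > 0\<close> by (simp add: power_less_imp_less_base)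
  qed
  then show "\<exists>F0. finite F0 \<and> F0 \<subseteq> A \<and> (\<forall>G. finite G \<and> G \<subseteq> A - F0 \<longrightarrow> norm (sum f G) < e)"
    using F0 by blast
qed

lemma norm_has_sum_le:
  fixes f :: "'i \<Rightarrow> 'a::real_normed_vector"
  assumes "(f has_sum S) A" "\<And>F. finite F \<Longrightarrow> F \<subseteq> A \<Longrightarrow> norm (sum f F) \<le> c"
  shows "norm S \<le> c"
proof (rule tendsto_upperbound)
  show "((\<lambda>F. norm (sum f F)) \<longlongrightarrow> norm S) (finite_subsets_at_top A)"
    using assms(1) unfolding has_sum_def by (rule tendsto_norm)
qed (use assms(2) in \<open>auto simp: eventually_finite_subsets_at_top_weakI\<close>)

lemma has_sum_single_support:
  fixes g :: "'i \<Rightarrow> 'a::{comm_monoid_add,topological_space}"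
  assumes "m \<in> A" "\<And>l. l \<in> A \<Longrightarrow> l \<noteq> m \<Longrightarrow> g l = 0"
  shows "(g has_sum g m) A"
proof -
  have "(g has_sum g m) {m}"
    by (simp add: has_sum_finiteI)
  then show ?thesis
    by (subst has_sum_cong_neutral[where T="{m}"]) (use assms in auto)
qed

section \<open>Spectral calculus of K* K for compact K\<close>

locale compact_operator =
  fixes K :: "'x::{real_inner,complete_space} \<Rightarrow> 'y::real_inner"
  assumes compact_op: "compact_op K"
begin

abbreviation A :: "'x \<Rightarrow> 'x" where
  "A \<equiv> adjoint K \<circ> K"

lemma bounded_linear_K: "bounded_linear K"
  using compact_op by (simp add: compact_op_def)

lemma adjoint_K_works: "inner (K x) y = inner x (adjoint K y)"
  by (rule bounded_linear_adjoint_works[OF bounded_linear_K])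

lemma bounded_linear_adjoint_K: "bounded_linear (adjoint K)"
  by (rule bounded_linear_adjoint[OF bounded_linear_K])

lemma bounded_linear_A: "bounded_linear A"
  unfolding comp_def by (rule bounded_linear_compose[OF bounded_linear_adjoint_K bounded_linear_K])

lemma inner_A: "inner (A x) y = inner (K x) (K y)"
  by (metis adjoint_K_works inner_commute comp_apply)

lemma A_self_adjoint: "inner (A x) y = inner x (A y)"
  by (metis inner_A inner_commute)

lemma inner_A_self: "inner (A x) x = norm (K x) ^ 2"
  unfolding power2_norm_eq_inner by (rule inner_A)

definition eigenspace :: "real \<Rightarrow> 'x set" where
  "eigenspace l = {e. A e = l *\<^sub>R e}"

definition pos_eigenvalues :: "real set" where
  "pos_eigenvalues = {l. 0 < l \<and> (\<exists>e. e \<noteq> 0 \<and> A e = l *\<^sub>R e)}"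

lemma subspace_eigenspace: "subspace (eigenspace l)"
proof -
  interpret bounded_linear A by (rule bounded_linear_A)
  show ?thesis
    unfolding subspace_def eigenspace_def using add scale
    by (auto simp: algebra_simps simp del: comp_apply)
qed

lemma closed_eigenspace: "closed (eigenspace l)"
  unfolding eigenspace_def
  by (intro closed_Collect_eq linear_continuous_on[OF bounded_linear_A] continuous_intros)

lemma eigenspaces_orthogonal:
  assumes "l \<noteq> m" "e \<in> eigenspace l" "f \<in> eigenspace m"
  shows "inner e f = 0"
proof -
  have "l * inner e f = inner (A e) f"
    using assms(2) by (simp add: eigenspace_def)
  also have "\<dots> = inner e (A f)"
    by (rule A_self_adjoint)
  also have "\<dots> = m * inner e f"
    using assms(3) by (simp add: eigenspace_def)
  finally show ?thesis
    using assms(1) by simp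
qed

lemma pos_eigenvalue_bounds:
  assumes "l \<in> pos_eigenvalues"
  shows "0 < l" "l \<le> (onorm K)\<^sup>2"
proof -
  obtain e where "0 < l" "e \<noteq> 0" "A e = l *\<^sub>R e"
    using assms by (auto simp: pos_eigenvalues_def)
  then have "l * norm e ^ 2 = norm (K e) ^ 2"
    using inner_A_self[of e] by (simp add: power2_norm_eq_inner)
  also have "\<dots> \<le> (onorm K * norm e) ^ 2"
    by (intro power_mono onorm[OF bounded_linear_K]) auto
  finally show "l \<le> (onorm K)\<^sup>2"
    using \<open>e \<noteq> 0\<close> by (simp add: power_mult_distrib)
  show "0 < l" by fact
qed

definition eigenproj :: "real \<Rightarrow> 'x \<Rightarrow> 'x" where
  "eigenproj l = orthogonal_projection (eigenspace l)"

lemma eigenproj_in: "eigenproj l x \<in> eigenspace l"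
  unfolding eigenproj_def
  by (rule orthogonal_projection_in[OF subspace_eigenspace closed_eigenspace])

lemma A_eigenproj: "A (eigenproj l x) = l *\<^sub>R eigenproj l x"
  using eigenproj_in by (simp add: eigenspace_def)

lemma eigenproj_id: "e \<in> eigenspace l \<Longrightarrow> eigenproj l e = e"
  unfolding eigenproj_def
  by (rule orthogonal_projection_id[OF subspace_eigenspace closed_eigenspace])

lemma eigenproj_other: "e \<in> eigenspace m \<Longrightarrow> l \<noteq> m \<Longrightarrow> eigenproj l e = 0"
  unfolding eigenproj_def
  by (rule orthogonal_projection_orthogonal_vector[OF subspace_eigenspace closed_eigenspace])
    (use eigenspaces_orthogonal[of m l e] in auto)

lemma eigenproj_self_adjoint: "inner (eigenproj l a) b = inner a (eigenproj l b)"
  unfolding eigenproj_def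
  by (rule orthogonal_projection_self_adjoint[OF subspace_eigenspace closed_eigenspace])

lemma bounded_linear_eigenproj: "bounded_linear (eigenproj l)"
  unfolding eigenproj_def
  by (rule bounded_linear_orthogonal_projection[OF subspace_eigenspace closed_eigenspace])

lemma eigenproj_scaleR: "eigenproj l (r *\<^sub>R x) = r *\<^sub>R eigenproj l x"
  by (rule linear_scale[OF bounded_linear.linear[OF bounded_linear_eigenproj]])

lemma pairwise_orthogonal_eigenproj:
  "pairwise (\<lambda>l m. orthogonal (h l *\<^sub>R eigenproj l x) (h m *\<^sub>R eigenproj m x)) S"
  unfolding pairwise_def orthogonal_def using eigenspaces_orthogonal[OF _ eigenproj_in eigenproj_in]
  by simp

lemma bessel_inequality_eigenproj:
  assumes "finite G"
  shows "(\<Sum>l\<in>G. norm (eigenproj l x) ^ 2) \<le> norm x ^ 2"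
proof -
  define s where "s = (\<Sum>l\<in>G. eigenproj l x)"
  have "inner (x - s) (eigenproj m x) = 0" if "m \<in> G" for m
  proof -
    have "(\<Sum>l\<in>G. inner (eigenproj l x) (eigenproj m x)) = inner (eigenproj m x) (eigenproj m x)"
      using assms that eigenspaces_orthogonal[OF _ eigenproj_in eigenproj_in]
      by (subst sum.remove[of _ m]) (auto intro!: sum.neutral)
    moreover have "inner x (eigenproj m x) = inner (eigenproj m x) (eigenproj m x)"
      by (metis eigenproj_id eigenproj_in eigenproj_self_adjoint)
    ultimately show ?thesis
      by (simp add: s_def inner_diff_left inner_sum_left)
  qed
  then have "orthogonal (x - s) s"
    unfolding orthogonal_def s_def by (simp add: inner_sum_right)
  then have "norm x ^ 2 = norm (x - s) ^ 2 + norm s ^ 2"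
    using norm_add_Pythagorean[of "x - s" s] by simp
  moreover have "norm s ^ 2 = (\<Sum>l\<in>G. norm (eigenproj l x) ^ 2)"
    unfolding s_def using norm_sum_Pythagorean[OF assms pairwise_orthogonal_eigenproj[of "\<lambda>_. 1"]]
    by simp
  ultimately show ?thesis
    by simp
qed


definition bounded_symbol :: "(real \<Rightarrow> real) \<Rightarrow> bool" where
  "bounded_symbol h \<longleftrightarrow> (\<exists>B. \<forall>l\<in>pos_eigenvalues. \<bar>h l\<bar> \<le> B)"

lemma bounded_symbolI: "(\<And>l. l \<in> pos_eigenvalues \<Longrightarrow> \<bar>h l\<bar> \<le> B) \<Longrightarrow> bounded_symbol h"
  unfolding bounded_symbol_def by blast

lemma bounded_symbol_const: "bounded_symbol (\<lambda>_. c)"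
  by (rule bounded_symbolI[of _ "\<bar>c\<bar>"]) simp

lemma bounded_symbol_id: "bounded_symbol (\<lambda>l. l)"
  by (rule bounded_symbolI[of _ "(onorm K)\<^sup>2"]) (use pos_eigenvalue_bounds in force)

lemma bounded_symbol_mult:
  assumes "bounded_symbol g" "bounded_symbol h"
  shows "bounded_symbol (\<lambda>l. g l * h l)"
proof -
  obtain B C where "\<And>l. l \<in> pos_eigenvalues \<Longrightarrow> \<bar>g l\<bar> \<le> B" "\<And>l. l \<in> pos_eigenvalues \<Longrightarrow> \<bar>h l\<bar> \<le> C"
    using assms unfolding bounded_symbol_def by blast
  then show ?thesis
    by (intro bounded_symbolI[of _ "B * C"]) (metis abs_ge_zero abs_mult mult_mono')
qed

definition spectral_sum :: "(real \<Rightarrow> real) \<Rightarrow> 'x \<Rightarrow> 'x" where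
  "spectral_sum h x = (\<Sum>\<^sub>\<infinity>l\<in>pos_eigenvalues. h l *\<^sub>R eigenproj l x)"

lemma norm_spectral_partial_sum_le:
  assumes "\<And>l. l \<in> pos_eigenvalues \<Longrightarrow> \<bar>h l\<bar> \<le> B" "finite F" "F \<subseteq> pos_eigenvalues"
  shows "norm (\<Sum>l\<in>F. h l *\<^sub>R eigenproj l x) ^ 2 \<le> B ^ 2 * norm x ^ 2"
proof -
  have "norm (\<Sum>l\<in>F. h l *\<^sub>R eigenproj l x) ^ 2 = (\<Sum>l\<in>F. (h l) ^ 2 * norm (eigenproj l x) ^ 2)"
    using norm_sum_Pythagorean[OF assms(2) pairwise_orthogonal_eigenproj] by (simp add: power_mult_distrib)
  also have "\<dots> \<le> (\<Sum>l\<in>F. B ^ 2 * norm (eigenproj l x) ^ 2)"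
  proof (intro sum_mono mult_right_mono)
    fix l assume "l \<in> F"
    then have "\<bar>h l\<bar> ^ 2 \<le> B ^ 2"
      using assms(1,3) by (intro power_mono) auto
    then show "h l ^ 2 \<le> B ^ 2"
      by simp
  qed simp
  also have "\<dots> \<le> B ^ 2 * norm x ^ 2"
    unfolding sum_distrib_left[symmetric]
    by (intro mult_left_mono bessel_inequality_eigenproj assms) auto
  finally show ?thesis .
qed

lemma has_sum_spectral_sum:
  assumes "bounded_symbol h"
  shows "((\<lambda>l. h l *\<^sub>R eigenproj l x) has_sum spectral_sum h x) pos_eigenvalues"
proof -
  obtain B where B: "\<And>l. l \<in> pos_eigenvalues \<Longrightarrow> \<bar>h l\<bar> \<le> B"
    using assms unfolding bounded_symbol_def by blast
  have "(\<lambda>l. norm (h l *\<^sub>R eigenproj l x) ^ 2) summable_on pos_eigenvalues"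
  proof (rule nonneg_bdd_above_summable_on)
    show "bdd_above (sum (\<lambda>l. norm (h l *\<^sub>R eigenproj l x) ^ 2) ` {F. F \<subseteq> pos_eigenvalues \<and> finite F})"
      using norm_spectral_partial_sum_le[OF B]
        norm_sum_Pythagorean[OF _ pairwise_orthogonal_eigenproj, symmetric]
      by (intro bdd_aboveI2[of _ _ "B ^ 2 * norm x ^ 2"]) auto
  qed auto
  then have "(\<lambda>l. h l *\<^sub>R eigenproj l x) summable_on pos_eigenvalues"
    by (rule orthogonal_family_summable_on[OF _ pairwise_orthogonal_eigenproj])
  then show ?thesis
    unfolding spectral_sum_def by simp
qed

lemma norm_spectral_sum_le:
  assumes B: "\<And>l. l \<in> pos_eigenvalues \<Longrightarrow> \<bar>h l\<bar> \<le> B" and "0 \<le> B"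
  shows "norm (spectral_sum h x) \<le> B * norm x"
proof (rule norm_has_sum_le[OF has_sum_spectral_sum[OF bounded_symbolI[OF B]]])
  show "norm (\<Sum>l\<in>F. h l *\<^sub>R eigenproj l x) \<le> B * norm x"
    if "finite F" "F \<subseteq> pos_eigenvalues" for F
  proof -
    have "norm (\<Sum>l\<in>F. h l *\<^sub>R eigenproj l x) ^ 2 \<le> (B * norm x) ^ 2"
      unfolding power_mult_distrib by (rule norm_spectral_partial_sum_le[OF B that])
    then show ?thesis
      by (rule power2_le_imp_le) (use \<open>0 \<le> B\<close> in simp)
  qed
qed

lemma spectral_sum_eigenvector:
  assumes "m \<in> pos_eigenvalues" "e \<in> eigenspace m"
  shows "spectral_sum h e = h m *\<^sub>R e"
proof -
  have "((\<lambda>l. h l *\<^sub>R eigenproj l e) has_sum (h m *\<^sub>R eigenproj m e)) pos_eigenvalues"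
    by (rule has_sum_single_support[OF assms(1)]) (use eigenproj_other[OF assms(2)] in simp)
  then show ?thesis
    unfolding spectral_sum_def using eigenproj_id[OF assms(2)] by (simp add: infsumI)
qed

lemma spectral_sum_kernel:
  assumes "A k = 0"
  shows "spectral_sum h k = 0"
proof -
  have "k \<in> eigenspace 0"
    using assms by (simp add: eigenspace_def)
  have "((\<lambda>l. h l *\<^sub>R eigenproj l k) has_sum 0) pos_eigenvalues"
  proof (rule has_sum_0)
    fix l
    assume "l \<in> pos_eigenvalues"
    then have "l \<noteq> 0"
      using pos_eigenvalue_bounds(1) by fastforce
    then show "h l *\<^sub>R eigenproj l k = 0"
      using eigenproj_other[OF \<open>k \<in> eigenspace 0\<close>] by simp
  qed
  then show ?thesis
    unfolding spectral_sum_def by (simp add: infsumI)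
qed

lemma eigenproj_spectral_sum:
  assumes "bounded_symbol h" "m \<in> pos_eigenvalues"
  shows "eigenproj m (spectral_sum h x) = h m *\<^sub>R eigenproj m x"
proof -
  have "((\<lambda>l. eigenproj m (h l *\<^sub>R eigenproj l x)) has_sum eigenproj m (spectral_sum h x)) pos_eigenvalues"
    by (rule has_sum_bounded_linear[OF bounded_linear_eigenproj has_sum_spectral_sum[OF assms(1)]])
  moreover have "((\<lambda>l. eigenproj m (h l *\<^sub>R eigenproj l x)) has_sum
      eigenproj m (h m *\<^sub>R eigenproj m x)) pos_eigenvalues"
    by (rule has_sum_single_support[OF assms(2)])
      (simp add: eigenproj_scaleR eigenproj_other[OF eigenproj_in])
  ultimately have "eigenproj m (spectral_sum h x) = eigenproj m (h m *\<^sub>R eigenproj m x)"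
    by (rule has_sum_unique)
  then show ?thesis
    by (simp add: eigenproj_scaleR eigenproj_id[OF eigenproj_in])
qed

lemma bounded_linear_spectral_sum:
  assumes "bounded_symbol h"
  shows "bounded_linear (spectral_sum h)"
proof -
  obtain B where B: "\<And>l. l \<in> pos_eigenvalues \<Longrightarrow> \<bar>h l\<bar> \<le> B"
    using assms unfolding bounded_symbol_def by blast
  note has_sum = has_sum_spectral_sum[OF assms]
  show ?thesis
  proof (rule bounded_linear_intro[where K="max B 0"])
    fix x y
    have "(\<lambda>l. h l *\<^sub>R eigenproj l x + h l *\<^sub>R eigenproj l y) = (\<lambda>l. h l *\<^sub>R eigenproj l (x + y))"
      by (simp add: linear_add[OF bounded_linear.linear[OF bounded_linear_eigenproj]] scaleR_add_right)
    then show "spectral_sum h (x + y) = spectral_sum h x + spectral_sum h y"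
      using has_sum_unique[OF has_sum[of "x + y"]] has_sum_add[OF has_sum[of x] has_sum[of y]] by simp
  next
    fix r x
    have "(\<lambda>l. r *\<^sub>R (h l *\<^sub>R eigenproj l x)) = (\<lambda>l. h l *\<^sub>R eigenproj l (r *\<^sub>R x))"
      by (simp add: eigenproj_scaleR mult.commute)
    then show "spectral_sum h (r *\<^sub>R x) = r *\<^sub>R spectral_sum h x"
      using has_sum_unique[OF has_sum[of "r *\<^sub>R x"]] has_sum_scaleR[OF has_sum[of x], of r] by simp
  next
    fix x
    have "\<bar>h l\<bar> \<le> max B 0" if "l \<in> pos_eigenvalues" for l
      using B[OF that] by linarith
    then show "norm (spectral_sum h x) \<le> norm x * max B 0"
      using norm_spectral_sum_le[of h "max B 0" x] by (simp add: mult.commute)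
  qed
qed

lemma spectral_sum_comp:
  assumes "bounded_symbol h"
  shows "spectral_sum g (spectral_sum h x) = spectral_sum (\<lambda>l. g l * h l) x"
proof -
  have "g l *\<^sub>R eigenproj l (spectral_sum h x) = (g l * h l) *\<^sub>R eigenproj l x"
    if "l \<in> pos_eigenvalues" for l
    by (simp add: eigenproj_spectral_sum[OF assms that])
  then show ?thesis
    unfolding spectral_sum_def[of g] spectral_sum_def[of "\<lambda>l. g l * h l"] by (rule infsum_cong)
qed

lemma spectral_sum_diff:
  assumes "bounded_symbol g" "bounded_symbol h"
  shows "spectral_sum g x - spectral_sum h x = spectral_sum (\<lambda>l. g l - h l) x"
proof -
  have "((\<lambda>l. g l *\<^sub>R eigenproj l x + (-1) *\<^sub>R (h l *\<^sub>R eigenproj l x)) has_sum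
      (spectral_sum g x + (-1) *\<^sub>R spectral_sum h x)) pos_eigenvalues"
    by (intro has_sum_add has_sum_scaleR has_sum_spectral_sum assms)
  moreover have "(\<lambda>l. g l *\<^sub>R eigenproj l x + (-1) *\<^sub>R (h l *\<^sub>R eigenproj l x)) =
      (\<lambda>l. (g l - h l) *\<^sub>R eigenproj l x)"
    by (simp add: algebra_simps)
  ultimately have "((\<lambda>l. (g l - h l) *\<^sub>R eigenproj l x) has_sum
      (spectral_sum g x - spectral_sum h x)) pos_eigenvalues"
    by simp
  then show ?thesis
    unfolding spectral_sum_def[of "\<lambda>l. g l - h l"] by (rule infsumI[symmetric])
qed

lemma spectral_sum_self_adjoint:
  assumes "bounded_symbol h"
  shows "inner (spectral_sum h a) b = inner a (spectral_sum h b)"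
proof -
  have "((\<lambda>l. inner (h l *\<^sub>R eigenproj l a) b) has_sum inner (spectral_sum h a) b) pos_eigenvalues"
    by (rule has_sum_bounded_linear[OF bounded_linear_inner_left has_sum_spectral_sum[OF assms]])
  moreover have "((\<lambda>l. inner (h l *\<^sub>R eigenproj l a) b) has_sum inner a (spectral_sum h b)) pos_eigenvalues"
    using has_sum_bounded_linear[OF bounded_linear_inner_right has_sum_spectral_sum[OF assms], of a b]
    by (simp add: eigenproj_self_adjoint)
  ultimately show ?thesis
    by (rule has_sum_unique)
qed


lemma K_scaleR: "K (r *\<^sub>R x) = r *\<^sub>R K x"
  by (rule linear_scale[OF bounded_linear.linear[OF bounded_linear_K]])

definition sq_norm_on :: "'x set \<Rightarrow> real" where
  "sq_norm_on V = (SUP v\<in>{v\<in>V. norm v < 1}. norm (K v) ^ 2)"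

lemma sq_norm_on_upper:
  assumes "v \<in> V" "norm v < 1"
  shows "norm (K v) ^ 2 \<le> sq_norm_on V"
  unfolding sq_norm_on_def
proof (rule cSUP_upper)
  show "bdd_above ((\<lambda>v. norm (K v) ^ 2) ` {v \<in> V. norm v < 1})"
  proof (rule bdd_aboveI2)
    fix u assume "u \<in> {v \<in> V. norm v < 1}"
    then have "onorm K * norm u \<le> onorm K"
      using onorm_pos_le[OF bounded_linear_K] by (auto intro: mult_left_le)
    then have "norm (K u) \<le> onorm K"
      using onorm[OF bounded_linear_K, of u] by linarith
    then show "norm (K u) ^ 2 \<le> (onorm K) ^ 2"
      by (simp add: power_mono)
  qed
qed (use assms in auto)

lemma sq_norm_on_approx:
  assumes "0 \<in> V" "e > 0"
  obtains v where "v \<in> V" "norm v < 1" "sq_norm_on V - e < norm (K v) ^ 2"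
proof -
  have "sq_norm_on V - e < sq_norm_on V"
    using assms(2) by simp
  then show thesis
    using less_cSUP_iff[of "{v \<in> V. norm v < 1}"] assms(1) that sq_norm_on_upper
    unfolding sq_norm_on_def by (metis (no_types, lifting) empty_iff mem_Collect_eq norm_zero
        zero_less_one bdd_aboveI2)
qed

lemma norm_K_sq_le_sq_norm_on:
  assumes "subspace V" "u \<in> V"
  shows "norm (K u) ^ 2 \<le> sq_norm_on V * norm u ^ 2"
proof (cases "u = 0")
  case False
  then have "norm u > 0"
    by simp
  have "norm (K u) ^ 2 / norm u ^ 2 \<le> sq_norm_on V"
  proof (rule field_le_mult_one_interval)
    fix z :: real
    assume z: "0 < z" "z < 1"
    define w where "w = (sqrt z / norm u) *\<^sub>R u"
    have "w \<in> V"
      using assms by (simp add: w_def subspace_mul)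
    moreover have "norm w < 1"
      using z \<open>norm u > 0\<close> by (simp add: w_def)
    moreover have "norm (K w) ^ 2 = z * (norm (K u) ^ 2 / norm u ^ 2)"
      using z \<open>norm u > 0\<close> by (simp add: w_def K_scaleR power_mult_distrib power_divide)
    ultimately show "z * (norm (K u) ^ 2 / norm u ^ 2) \<le> sq_norm_on V"
      using sq_norm_on_upper by metis
  qed
  then show ?thesis
    using \<open>norm u > 0\<close> by (simp add: divide_le_eq mult.commute)
qed (simp add: linear_0[OF bounded_linear.linear[OF bounded_linear_K]])

lemma almost_eigenvector_sq_norm_on:
  assumes "subspace V" and inv: "\<And>v. v \<in> V \<Longrightarrow> A v \<in> V" and "v \<in> V" "norm v \<le> 1"
  defines "m \<equiv> sq_norm_on V"
  shows "norm (A v - m *\<^sub>R v) ^ 2 \<le> m * (m - norm (K v) ^ 2)"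
proof -
  have "m \<ge> 0"
    using norm_K_sq_le_sq_norm_on[OF assms(1) subspace_0[OF assms(1)]] sq_norm_on_upper[of 0 V]
      subspace_0[OF assms(1)] by (simp add: m_def linear_0[OF bounded_linear.linear[OF bounded_linear_K]])
  \<comment> \<open>Cauchy--Schwarz for the form (x, y) |-> inner (K x) (K y).\<close>
  have "norm (A v) ^ 2 \<le> m * norm (K v) ^ 2"
  proof -
    have "norm (A v) ^ 2 = inner (K v) (K (A v))"
      using inner_A[of v "A v"] by (simp add: power2_norm_eq_inner)
    also have "\<dots> \<le> norm (K v) * norm (K (A v))"
      by (rule norm_cauchy_schwarz)
    finally have "(norm (A v) ^ 2) ^ 2 \<le> norm (K v) ^ 2 * norm (K (A v)) ^ 2"
      by (metis power_mono power_mult_distrib zero_le_power2)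
    also have "\<dots> \<le> norm (K v) ^ 2 * (m * norm (A v) ^ 2)"
      unfolding m_def by (intro mult_left_mono norm_K_sq_le_sq_norm_on assms inv) auto
    finally show ?thesis
      by (cases "A v = 0") (auto simp: power2_eq_square algebra_simps mult_le_cancel_right
          \<open>m \<ge> 0\<close>)
  qed
  moreover have "m ^ 2 * norm v ^ 2 \<le> m ^ 2"
    using assms(4) by (simp add: mult_left_le power_le_one)
  moreover have "norm (a - m *\<^sub>R v) ^ 2 = norm a ^ 2 - 2 * m * inner a v + m ^ 2 * norm v ^ 2" for a
    unfolding power2_norm_eq_inner by (simp add: inner_commute power2_eq_square algebra_simps)
  note this[of "A v", unfolded inner_A_self]
  ultimately show ?thesis
    by (simp add: power2_eq_square algebra_simps)
qed


lemma adjoint_K_zero: "adjoint K 0 = 0"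
  by (rule linear_0[OF bounded_linear.linear[OF bounded_linear_adjoint_K]])

lemma sq_norm_on_maximizing_sequence:
  assumes "subspace V"
  obtains v where "\<And>n. v n \<in> V" "\<And>n. norm (v n) < 1" "(\<lambda>n. norm (K (v n)) ^ 2) \<longlonglongrightarrow> sq_norm_on V"
proof -
  define m where "m = sq_norm_on V"
  have "\<exists>v. v \<in> V \<and> norm v < 1 \<and> m - 1 / Suc n < norm (K v) ^ 2" for n
  proof -
    obtain v where "v \<in> V" "norm v < 1" "m - 1 / Suc n < norm (K v) ^ 2"
      using sq_norm_on_approx[OF subspace_0[OF assms], of "1 / Suc n"] by (auto simp: m_def)
    then show ?thesis
      by blast
  qed
  then obtain v where v_in: "\<And>n. v n \<in> V" and v_norm: "\<And>n. norm (v n) < 1"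
    and v_max: "\<And>n. m - 1 / Suc n < norm (K (v n)) ^ 2"
    by metis
  have "(\<lambda>n. norm (K (v n)) ^ 2) \<longlonglongrightarrow> m"
  proof (rule tendsto_sandwich[where f="\<lambda>n. m - 1 / Suc n" and h="\<lambda>n. m"])
    show "\<forall>\<^sub>F n in sequentially. m - 1 / Suc n \<le> norm (K (v n)) ^ 2"
      using v_max by (intro always_eventually allI less_imp_le)
    show "\<forall>\<^sub>F n in sequentially. norm (K (v n)) ^ 2 \<le> m"
      using sq_norm_on_upper[OF v_in v_norm] by (simp add: m_def)
    show "(\<lambda>n. m - 1 / real (Suc n)) \<longlonglongrightarrow> m"
      using tendsto_diff[OF tendsto_const[of m] LIMSEQ_Suc[OF lim_inverse_n']] by simp
  qed simp
  then show thesis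
    unfolding m_def by (rule that[OF v_in v_norm])
qed

lemma invariant_subspace_eigenvector:
  assumes V: "subspace V" "closed V" and inv: "\<And>v. v \<in> V \<Longrightarrow> A v \<in> V"
    and "v0 \<in> V" "K v0 \<noteq> 0"
  obtains e where "e \<in> V" "e \<noteq> 0" "A e = sq_norm_on V *\<^sub>R e" "0 < sq_norm_on V"
proof -
  define m where "m = sq_norm_on V"
  have "0 < norm (K v0) ^ 2"
    using \<open>K v0 \<noteq> 0\<close> by simp
  also have "\<dots> \<le> m * norm v0 ^ 2"
    unfolding m_def by (rule norm_K_sq_le_sq_norm_on[OF V(1) \<open>v0 \<in> V\<close>])
  finally have "0 < m"
    by (simp add: zero_less_mult_iff)
  obtain v where v_in: "\<And>n. v n \<in> V" and v_norm: "\<And>n. norm (v n) < 1"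
    and Kv: "(\<lambda>n. norm (K (v n)) ^ 2) \<longlonglongrightarrow> sq_norm_on V"
    by (rule sq_norm_on_maximizing_sequence[OF V(1)]) (rule that)
  \<comment> \<open>Compactness of K: a subsequence of A (v n) = K* (K (v n)) converges.\<close>
  define S where "S = adjoint K ` closure (K ` ball 0 1)"
  have "compact S"
    using compact_op unfolding S_def compact_op_def
    by (intro compact_continuous_image linear_continuous_on bounded_linear_adjoint_K) auto
  moreover have "K (v n) \<in> closure (K ` ball 0 1)" for n
    using v_norm[of n] by (intro closure_subset[THEN subsetD]) auto
  then have "\<forall>n. A (v n) \<in> S"
    by (simp add: S_def)
  ultimately obtain y r where "strict_mono r" "((\<lambda>n. A (v n)) \<circ> r) \<longlonglongrightarrow> y"
    using seq_compactE[OF compact_imp_seq_compact] by metis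
  then have y: "(\<lambda>n. A (v (r n))) \<longlonglongrightarrow> y"
    by (simp add: comp_def)
  have Kv_lim: "(\<lambda>n. norm (K (v (r n))) ^ 2) \<longlonglongrightarrow> m"
    using LIMSEQ_subseq_LIMSEQ[OF Kv \<open>strict_mono r\<close>] by (simp add: comp_def m_def)
  have "(\<lambda>n. A (v (r n)) - m *\<^sub>R v (r n)) \<longlonglongrightarrow> 0"
  proof (rule Lim_null_comparison)
    show "\<forall>\<^sub>F n in sequentially. norm (A (v (r n)) - m *\<^sub>R v (r n))
        \<le> sqrt (m * (m - norm (K (v (r n))) ^ 2))"
    proof (intro always_eventually allI real_le_rsqrt)
      fix n
      show "norm (A (v (r n)) - m *\<^sub>R v (r n)) ^ 2 \<le> m * (m - norm (K (v (r n))) ^ 2)"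
        unfolding m_def by (rule almost_eigenvector_sq_norm_on[OF V(1) inv v_in less_imp_le[OF v_norm]])
    qed
    have "(\<lambda>n. sqrt (m * (m - norm (K (v (r n))) ^ 2))) \<longlonglongrightarrow> sqrt (m * (m - m))"
      by (intro tendsto_real_sqrt tendsto_mult tendsto_const tendsto_diff Kv_lim)
    then show "(\<lambda>n. sqrt (m * (m - norm (K (v (r n))) ^ 2))) \<longlonglongrightarrow> 0"
      by simp
  qed
  from tendsto_scaleR[OF tendsto_const[of "1 / m"] tendsto_diff[OF y this]]
  have v_lim: "(\<lambda>n. v (r n)) \<longlonglongrightarrow> (1 / m) *\<^sub>R y"
    using \<open>0 < m\<close> by simp
  define e where "e = (1 / m) *\<^sub>R y"
  have "e \<in> V"
    using V(2) v_in v_lim unfolding e_def by (metis closed_sequentially)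
  moreover have "A e = m *\<^sub>R e"
    using LIMSEQ_unique[OF bounded_linear.tendsto[OF bounded_linear_A v_lim] y] \<open>0 < m\<close>
    by (simp add: e_def)
  moreover have "e \<noteq> 0"
  proof -
    have "(\<lambda>n. norm (K (v (r n))) ^ 2) \<longlonglongrightarrow> norm (K e) ^ 2"
      unfolding e_def by (intro tendsto_power tendsto_norm bounded_linear.tendsto[OF bounded_linear_K v_lim])
    then have "norm (K e) ^ 2 = m"
      using Kv_lim by (rule LIMSEQ_unique)
    then show ?thesis
      using \<open>0 < m\<close> by (auto simp: linear_0[OF bounded_linear.linear[OF bounded_linear_K]])
  qed
  ultimately show thesis
    using that \<open>0 < m\<close> unfolding m_def by blast
qed

lemma kernel_if_orthogonal_to_eigenspaces:
  assumes "\<And>l s. l \<in> pos_eigenvalues \<Longrightarrow> s \<in> eigenspace l \<Longrightarrow> inner v s = 0"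
  shows "A v = 0"
proof (rule ccontr)
  assume "A v \<noteq> 0"
  then have "K v \<noteq> 0"
    using adjoint_K_zero by auto
  define V where "V = {v. \<forall>l\<in>pos_eigenvalues. \<forall>s\<in>eigenspace l. inner v s = 0}"
  have "subspace V"
    unfolding subspace_def V_def by (auto simp: inner_add_left)
  have "closed (\<Inter>l\<in>pos_eigenvalues. \<Inter>s\<in>eigenspace l. {v. inner v s = 0})"
    by (intro closed_INT ballI closed_Collect_eq continuous_intros)
  moreover have "V = (\<Inter>l\<in>pos_eigenvalues. \<Inter>s\<in>eigenspace l. {v. inner v s = 0})"
    by (auto simp: V_def)
  ultimately have "closed V"
    by simp
  have inv: "A u \<in> V" if "u \<in> V" for u
    using that A_self_adjoint by (auto simp: V_def eigenspace_def)
  have "v \<in> V"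
    using assms by (auto simp: V_def)
  obtain e where "e \<in> V" "e \<noteq> 0" "A e = sq_norm_on V *\<^sub>R e" "0 < sq_norm_on V"
    by (rule invariant_subspace_eigenvector[OF \<open>subspace V\<close> \<open>closed V\<close> inv \<open>v \<in> V\<close> \<open>K v \<noteq> 0\<close>])
  then have "sq_norm_on V \<in> pos_eigenvalues" "e \<in> eigenspace (sq_norm_on V)"
    by (auto simp: pos_eigenvalues_def eigenspace_def)
  then have "inner e e = 0"
    using \<open>e \<in> V\<close> unfolding V_def by blast
  then show False
    using \<open>e \<noteq> 0\<close> by simp
qed

lemma A_spectral_sum_remainder: "A (x - spectral_sum (\<lambda>_. 1) x) = 0"
proof (rule kernel_if_orthogonal_to_eigenspaces)
  fix l s
  assume l: "l \<in> pos_eigenvalues" and s: "s \<in> eigenspace l"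
  have "inner (spectral_sum (\<lambda>_. 1) x) s = inner (spectral_sum (\<lambda>_. 1) x) (eigenproj l s)"
    by (simp add: eigenproj_id[OF s])
  also have "\<dots> = inner (eigenproj l (spectral_sum (\<lambda>_. 1) x)) s"
    by (rule eigenproj_self_adjoint[symmetric])
  also have "\<dots> = inner (eigenproj l x) s"
    by (simp add: eigenproj_spectral_sum[OF bounded_symbol_const l])
  also have "\<dots> = inner x s"
    by (simp add: eigenproj_self_adjoint eigenproj_id[OF s])
  finally show "inner (x - spectral_sum (\<lambda>_. 1) x) s = 0"
    by (simp add: inner_diff_left)
qed

lemma kernel_determines_remainder:
  assumes "linear T" "\<And>k. A k = 0 \<Longrightarrow> T k = 0"
  shows "T x = T (spectral_sum (\<lambda>_. 1) x)"
proof -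
  have "T x - T (spectral_sum (\<lambda>_. 1) x) = T (x - spectral_sum (\<lambda>_. 1) x)"
    by (rule linear_diff[OF assms(1), symmetric])
  also have "\<dots> = 0"
    by (rule assms(2)[OF A_spectral_sum_remainder])
  finally show ?thesis
    by simp
qed

lemma A_eq_spectral_sum: "A x = spectral_sum (\<lambda>l. l) x"
proof -
  have "A x = A (spectral_sum (\<lambda>_. 1) x)"
    by (rule kernel_determines_remainder[OF bounded_linear.linear[OF bounded_linear_A]])
  moreover have "((\<lambda>l. l *\<^sub>R eigenproj l x) has_sum A (spectral_sum (\<lambda>_. 1) x)) pos_eigenvalues"
    using has_sum_bounded_linear[OF bounded_linear_A has_sum_spectral_sum[OF bounded_symbol_const[of 1], of x]]
    by (simp only: scaleR_one A_eigenproj)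
  ultimately show ?thesis
    unfolding spectral_sum_def by (simp add: infsumI)
qed

lemma fun_calc_eq_spectral_sum:
  assumes "bounded_symbol h"
  shows "fun_calc h A = spectral_sum h"
  unfolding fun_calc_def
proof (rule the_equality)
  show "bounded_linear (spectral_sum h) \<and>
      (\<forall>x l. 0 < l \<longrightarrow> A x = l *\<^sub>R x \<longrightarrow> spectral_sum h x = h l *\<^sub>R x) \<and>
      (\<forall>x. A x = 0 \<longrightarrow> spectral_sum h x = 0)"
  proof (intro conjI allI impI)
    fix x l
    assume "0 < l" "A x = l *\<^sub>R x"
    then show "spectral_sum h x = h l *\<^sub>R x"
      using spectral_sum_kernel[of x h] spectral_sum_eigenvector[of l x h]
      by (cases "x = 0") (auto simp: pos_eigenvalues_def eigenspace_def)
  qed (use bounded_linear_spectral_sum[OF assms] spectral_sum_kernel in auto)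
next
  fix T
  assume T: "bounded_linear T \<and> (\<forall>x l. 0 < l \<longrightarrow> A x = l *\<^sub>R x \<longrightarrow> T x = h l *\<^sub>R x) \<and>
      (\<forall>x. A x = 0 \<longrightarrow> T x = 0)"
  show "T = spectral_sum h"
  proof
    fix x
    have "((\<lambda>l. T (1 *\<^sub>R eigenproj l x)) has_sum T (spectral_sum (\<lambda>_. 1) x)) pos_eigenvalues"
      using T has_sum_bounded_linear[OF _ has_sum_spectral_sum[OF bounded_symbol_const[of 1], of x]]
      by blast
    moreover have "T (1 *\<^sub>R eigenproj l x) = h l *\<^sub>R eigenproj l x" if "l \<in> pos_eigenvalues" for l
      using T A_eigenproj pos_eigenvalue_bounds(1)[OF that] by simp
    ultimately have "((\<lambda>l. h l *\<^sub>R eigenproj l x) has_sum T (spectral_sum (\<lambda>_. 1) x)) pos_eigenvalues"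
      by (simp cong: has_sum_cong)
    moreover have "T x = T (spectral_sum (\<lambda>_. 1) x)"
      using T by (intro kernel_determines_remainder bounded_linear.linear) auto
    ultimately show "T x = spectral_sum h x"
      using has_sum_unique[OF _ has_sum_spectral_sum[OF assms]] by metis
  qed
qed

end

section \<open>Error of the regularised solution\<close>

lemma regularising_filter_bounds:
  assumes "regularising_filter F L \<nu>\<^sub>0" "0 < \<nu>" "ereal \<nu> \<le> \<nu>\<^sub>0"
  obtains C\<^sub>F R C\<^sub>\<nu> where "0 < C\<^sub>F" "0 < R" "0 < C\<^sub>\<nu>"
    and "\<And>a l. 0 < a \<Longrightarrow> l \<in> {0<..L} \<Longrightarrow> \<bar>F a l\<bar> \<le> C\<^sub>F / a"
    and "\<And>a l. 0 < a \<Longrightarrow> l \<in> {0<..L} \<Longrightarrow> \<bar>l * F a l\<bar> \<le> R"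
    and "\<And>a l. 0 < a \<Longrightarrow> l \<in> {0<..L} \<Longrightarrow> l powr (\<nu>/2) * \<bar>1 - l * F a l\<bar> \<le> C\<^sub>\<nu> * a powr (\<nu>/2)"
proof -
  have "\<exists>C\<^sub>R>0. \<forall>a>0. \<forall>l\<in>{0<..L}. l * F a l < C\<^sub>R"
    and "\<exists>C\<^sub>F>0. \<forall>a>0. \<forall>l\<in>{0<..L}. \<bar>F a l\<bar> \<le> C\<^sub>F / a"
    and "filter_estimate F L \<nu>"
    using assms by (simp_all add: regularising_filter_def)
  then obtain C\<^sub>R C\<^sub>F C\<^sub>\<nu> where "0 < C\<^sub>R" "0 < C\<^sub>F" "0 < C\<^sub>\<nu>"
    and C\<^sub>R: "\<forall>a>0. \<forall>l\<in>{0<..L}. l * F a l < C\<^sub>R"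
    and C\<^sub>F: "\<forall>a>0. \<forall>l\<in>{0<..L}. \<bar>F a l\<bar> \<le> C\<^sub>F / a"
    and C\<^sub>\<nu>: "\<forall>a>0. \<forall>l\<in>{0<..L}. l powr (\<nu>/2) * \<bar>1 - l * F a l\<bar> \<le> C\<^sub>\<nu> * a powr (\<nu>/2)"
    unfolding filter_estimate_def by blast
  note C\<^sub>R = C\<^sub>R[rule_format] and C\<^sub>F = C\<^sub>F[rule_format] and C\<^sub>\<nu> = C\<^sub>\<nu>[rule_format]
  \<comment> \<open>The filter only bounds l F a l from above; from below it is controlled by C_F / a for l <= a
    and by the source estimate for l > a.\<close>
  have R: "\<bar>l * F a l\<bar> \<le> max C\<^sub>R (max C\<^sub>F C\<^sub>\<nu>)" if a: "0 < a" and l: "l \<in> {0<..L}" for a l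
  proof (cases "0 \<le> l * F a l")
    case True
    then show ?thesis
      using C\<^sub>R[OF a l] by simp
  next
    case neg: False
    show ?thesis
    proof (cases "l \<le> a")
      case True
      have "\<bar>l * F a l\<bar> = l * \<bar>F a l\<bar>"
        using l by (simp add: abs_mult)
      also have "\<dots> \<le> a * (C\<^sub>F / a)"
        using C\<^sub>F[OF a l] True l \<open>0 < C\<^sub>F\<close> a by (intro mult_mono) auto
      finally show ?thesis
        using a by simp
    next
      case False
      have "l powr (\<nu>/2) * (1 + \<bar>l * F a l\<bar>) \<le> C\<^sub>\<nu> * a powr (\<nu>/2)"
        using C\<^sub>\<nu>[OF a l] neg by simp
      also have "\<dots> \<le> C\<^sub>\<nu> * l powr (\<nu>/2)"
        using False a assms(2) \<open>0 < C\<^sub>\<nu>\<close> by (intro mult_left_mono powr_mono2) auto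
      finally have "1 + \<bar>l * F a l\<bar> \<le> C\<^sub>\<nu>"
        using l by (simp add: mult.commute)
      then show ?thesis
        by simp
    qed
  qed
  have "0 < max C\<^sub>R (max C\<^sub>F C\<^sub>\<nu>)"
    using \<open>0 < C\<^sub>R\<close> by simp
  from that[OF \<open>0 < C\<^sub>F\<close> this \<open>0 < C\<^sub>\<nu>\<close> C\<^sub>F R C\<^sub>\<nu>] show thesis .
qed

context compact_operator
begin

lemma adjoint_K_orthogonal_range: "z \<in> orth_compl (range K) \<Longrightarrow> adjoint K z = 0"
  using adjoint_K_works[of "adjoint K z" z] by (simp add: orth_compl_def inner_commute)

lemma mp_inverse_characterization:
  assumes "yh \<in> mp_domain K"
  shows "mp_inverse K yh \<in> orth_compl {v. K v = 0} \<and>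
      (\<exists>z \<in> orth_compl (range K). yh = K (mp_inverse K yh) + z)"
proof -
  interpret bounded_linear K by (rule bounded_linear_K)
  define N where "N = {v. K v = 0}"
  have "subspace N"
    unfolding N_def subspace_def by (auto simp: add scale)
  moreover have "closed N"
    unfolding N_def by (intro closed_Collect_eq continuous_on_const linear_continuous_on bounded_linear_K)
  obtain x0 z0 where y: "yh = K x0 + z0" and z0: "z0 \<in> orth_compl (range K)"
    using assms by (auto simp: mp_domain_def)
  have proj: "orthogonal_projection N x0 \<in> N"
      "\<And>s. s \<in> N \<Longrightarrow> inner (x0 - orthogonal_projection N x0) s = 0"
    by (rule orthogonal_projection_in[OF \<open>subspace N\<close> \<open>closed N\<close>],
        rule orthogonal_projection_orthogonal[OF \<open>subspace N\<close> \<open>closed N\<close>])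
  let ?P = "\<lambda>x. x \<in> orth_compl N \<and> (\<exists>z \<in> orth_compl (range K). yh = K x + z)"
  \<comment> \<open>Existence: the component of x0 orthogonal to the kernel.\<close>
  have exist: "?P (x0 - orthogonal_projection N x0)"
    using proj y z0 by (auto simp: orth_compl_def N_def diff)
  have unique: "x1 = x2" if x1: "?P x1" and x2: "?P x2" for x1 x2
  proof -
    obtain z1 z2 where z: "z1 \<in> orth_compl (range K)" "yh = K x1 + z1"
      "z2 \<in> orth_compl (range K)" "yh = K x2 + z2"
      using x1 x2 by blast
    then have "K (x1 - x2) = z2 - z1"
      by (simp add: diff algebra_simps)
    moreover have "inner (z2 - z1) (K (x1 - x2)) = 0"
      using z by (simp add: orth_compl_def inner_diff_left)
    ultimately have "x1 - x2 \<in> N"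
      by (simp add: N_def)
    moreover have "x1 - x2 \<in> orth_compl N"
      using x1 x2 by (auto simp: orth_compl_def inner_diff_left)
    ultimately have "inner (x1 - x2) (x1 - x2) = 0"
      by (simp add: orth_compl_def)
    then show ?thesis
      by simp
  qed
  have "\<exists>!x. ?P x"
    by (rule ex1I[where P="?P", OF exist]) (rule unique[OF _ exist])
  from theI'[OF this] show ?thesis
    unfolding mp_inverse_def N_def by simp
qed

lemma adjoint_K_mp_inverse:
  assumes "yh \<in> mp_domain K"
  shows "adjoint K yh = A (mp_inverse K yh)"
proof -
  define x where "x = mp_inverse K yh"
  obtain z where "z \<in> orth_compl (range K)" and yh: "yh = K x + z"
    using mp_inverse_characterization[OF assms] by (auto simp: x_def)
  have "adjoint K yh = adjoint K (K x) + adjoint K z"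
    unfolding yh by (rule linear_add[OF bounded_linear.linear[OF bounded_linear_adjoint_K]])
  then show ?thesis
    using adjoint_K_orthogonal_range[OF \<open>z \<in> orth_compl (range K)\<close>] by (simp add: x_def)
qed

lemma bounded_symbol_powr: "0 \<le> e \<Longrightarrow> bounded_symbol (\<lambda>l. l powr e)"
proof (rule bounded_symbolI)
  fix l
  assume "0 \<le> e" "l \<in> pos_eigenvalues"
  then show "\<bar>l powr e\<bar> \<le> ((onorm K)\<^sup>2) powr e"
    using pos_eigenvalue_bounds by (simp add: powr_mono2 less_imp_le)
qed

lemma source_condition_error_le:
  assumes h: "bounded_symbol h" and "0 < \<nu>"
    and c: "\<And>l. l \<in> pos_eigenvalues \<Longrightarrow> l powr (\<nu>/2) * \<bar>1 - l * h l\<bar> \<le> c" "0 \<le> c"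
  defines "g \<equiv> \<lambda>l. l powr (\<nu>/2)"
  shows "norm (spectral_sum h (A (spectral_sum g w)) - spectral_sum g w) \<le> c * norm w"
proof -
  have g: "bounded_symbol g"
    unfolding g_def using \<open>0 < \<nu>\<close> by (intro bounded_symbol_powr) simp
  have lg: "bounded_symbol (\<lambda>l. l * g l)"
    by (rule bounded_symbol_mult[OF bounded_symbol_id g])
  have "spectral_sum h (A (spectral_sum g w)) = spectral_sum (\<lambda>l. h l * (l * g l)) w"
    by (simp only: A_eq_spectral_sum spectral_sum_comp g lg)
  then have "spectral_sum h (A (spectral_sum g w)) - spectral_sum g w
      = spectral_sum (\<lambda>l. h l * (l * g l) - g l) w"
    using spectral_sum_diff[OF bounded_symbol_mult[OF h lg] g] by simp
  also have "norm \<dots> \<le> c * norm w"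
  proof (rule norm_spectral_sum_le[OF _ c(2)])
    fix l
    assume "l \<in> pos_eigenvalues"
    have "h l * (l * g l) - g l = - (g l * (1 - l * h l))"
      by (simp add: algebra_simps)
    then have "\<bar>h l * (l * g l) - g l\<bar> = l powr (\<nu>/2) * \<bar>1 - l * h l\<bar>"
      by (simp add: g_def abs_mult)
    then show "\<bar>h l * (l * g l) - g l\<bar> \<le> c"
      using c(1)[OF \<open>l \<in> pos_eigenvalues\<close>] by simp
  qed
  finally show ?thesis .
qed

lemma data_error_le:
  assumes B: "\<And>l. l \<in> pos_eigenvalues \<Longrightarrow> \<bar>h l\<bar> \<le> B"
    and R: "\<And>l. l \<in> pos_eigenvalues \<Longrightarrow> \<bar>l * h l\<bar> \<le> R" and "0 \<le> B" "0 \<le> R"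
  shows "norm (spectral_sum h (adjoint K v)) \<le> sqrt (B * R) * norm v"
proof -
  define u where "u = spectral_sum h (adjoint K v)"
  have h: "bounded_symbol h"
    using B by (rule bounded_symbolI)
  have lh: "bounded_symbol (\<lambda>l. l * h l)"
    by (rule bounded_symbol_mult[OF bounded_symbol_id h])
  have "norm u ^ 2 = inner (adjoint K v) (spectral_sum h u)"
    unfolding u_def power2_norm_eq_inner by (rule spectral_sum_self_adjoint[OF h])
  also have "\<dots> = inner v (K (spectral_sum h u))"
    by (metis adjoint_K_works inner_commute)
  also have "\<dots> \<le> norm v * norm (K (spectral_sum h u))"
    by (rule norm_cauchy_schwarz)
  finally have u_le: "norm u ^ 2 \<le> norm v * norm (K (spectral_sum h u))" .
  \<comment> \<open>norm (K (h(A) u)) ^ 2 = inner ((h(A) A h(A)) u) u, and the symbol of h(A) A h(A) is bounded by B * R.\<close>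
  have "norm (K (spectral_sum h u)) ^ 2 = inner (spectral_sum h (A (spectral_sum h u))) u"
    by (simp only: inner_A_self[symmetric] spectral_sum_self_adjoint[OF h] inner_commute)
  also have "spectral_sum h (A (spectral_sum h u)) = spectral_sum (\<lambda>l. h l * (l * h l)) u"
    by (simp only: A_eq_spectral_sum spectral_sum_comp h lh)
  also have "inner \<dots> u \<le> norm (spectral_sum (\<lambda>l. h l * (l * h l)) u) * norm u"
    by (rule norm_cauchy_schwarz)
  also have "\<dots> \<le> (B * R * norm u) * norm u"
  proof (intro mult_right_mono norm_spectral_sum_le)
    fix l
    assume "l \<in> pos_eigenvalues"
    then show "\<bar>h l * (l * h l)\<bar> \<le> B * R"
      unfolding abs_mult[of "h l"] using B R \<open>0 \<le> B\<close> by (intro mult_mono) auto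
  qed (use \<open>0 \<le> B\<close> \<open>0 \<le> R\<close> in auto)
  also have "(B * R * norm u) * norm u = (sqrt (B * R) * norm u) ^ 2"
    using \<open>0 \<le> B\<close> \<open>0 \<le> R\<close> by (simp add: power_mult_distrib power2_eq_square[of "norm u"])
  finally have "norm (K (spectral_sum h u)) \<le> sqrt (B * R) * norm u"
    by (rule power2_le_imp_le) (use \<open>0 \<le> B\<close> \<open>0 \<le> R\<close> in simp)
  then have "norm u * norm u \<le> (sqrt (B * R) * norm v) * norm u"
    using u_le mult_left_mono[of _ _ "norm v"] by (fastforce simp: power2_eq_square algebra_simps)
  then show ?thesis
    using \<open>0 \<le> B\<close> \<open>0 \<le> R\<close> by (cases "norm u = 0") (auto simp: u_def mult_le_cancel_right)
qed

lemma regularisation_error_le: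
  assumes "regularising_filter F ((onorm K)\<^sup>2) \<nu>\<^sub>0" "0 < \<nu>" "ereal \<nu> \<le> \<nu>\<^sub>0"
  obtains C\<^sub>1 C\<^sub>2 where "0 \<le> C\<^sub>1" "0 \<le> C\<^sub>2"
    and "\<And>a. 0 < a \<Longrightarrow> bounded_linear (fun_calc (F a) A \<circ> adjoint K)"
    and "\<And>a y yh w. 0 < a \<Longrightarrow> yh \<in> mp_domain K \<Longrightarrow>
      mp_inverse K yh = fun_calc (\<lambda>l. l powr (\<nu>/2)) A w \<Longrightarrow>
      norm ((fun_calc (F a) A \<circ> adjoint K) y - mp_inverse K yh)
        \<le> sqrt (C\<^sub>1 / a) * norm (y - yh) + C\<^sub>2 * a powr (\<nu>/2) * norm w"
proof (rule regularising_filter_bounds[OF assms])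
  fix C\<^sub>F R C\<^sub>\<nu>
  assume pos: "0 < C\<^sub>F" "0 < R" "0 < C\<^sub>\<nu>"
    and F: "\<And>a l. 0 < a \<Longrightarrow> l \<in> {0<..(onorm K)\<^sup>2} \<Longrightarrow> \<bar>F a l\<bar> \<le> C\<^sub>F / a"
    and lF: "\<And>a l. 0 < a \<Longrightarrow> l \<in> {0<..(onorm K)\<^sup>2} \<Longrightarrow> \<bar>l * F a l\<bar> \<le> R"
    and source: "\<And>a l. 0 < a \<Longrightarrow> l \<in> {0<..(onorm K)\<^sup>2} \<Longrightarrow>
        l powr (\<nu>/2) * \<bar>1 - l * F a l\<bar> \<le> C\<^sub>\<nu> * a powr (\<nu>/2)"
  have spec: "l \<in> {0<..(onorm K)\<^sup>2}" if "l \<in> pos_eigenvalues" for l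
    using pos_eigenvalue_bounds[OF that] by simp
  have h: "bounded_symbol (F a)" if a: "0 < a" for a
    by (rule bounded_symbolI) (rule F[OF a spec])
  have linear: "bounded_linear (fun_calc (F a) A \<circ> adjoint K)" if "0 < a" for a
    unfolding fun_calc_eq_spectral_sum[OF h[OF that]] unfolding comp_def
    by (rule bounded_linear_compose[OF bounded_linear_spectral_sum[OF h[OF that]] bounded_linear_adjoint_K])
  have bound: "norm ((fun_calc (F a) A \<circ> adjoint K) y - mp_inverse K yh)
      \<le> sqrt (C\<^sub>F / a * R) * norm (y - yh) + C\<^sub>\<nu> * a powr (\<nu>/2) * norm w"
    if a: "0 < a" and yh: "yh \<in> mp_domain K"
      and w: "mp_inverse K yh = fun_calc (\<lambda>l. l powr (\<nu>/2)) A w" for a y yh w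
  proof -
    define g :: "real \<Rightarrow> real" where "g = (\<lambda>l. l powr (\<nu>/2))"
    note h = h[OF a]
    have x: "mp_inverse K yh = spectral_sum g w"
      using w fun_calc_eq_spectral_sum[OF bounded_symbol_powr, of "\<nu>/2"] \<open>0 < \<nu>\<close>
      by (simp add: g_def)
    have "(fun_calc (F a) A \<circ> adjoint K) y = spectral_sum (F a) (adjoint K (y - yh) + adjoint K yh)"
      using linear_diff[OF bounded_linear.linear[OF bounded_linear_adjoint_K], of y yh]
      by (simp add: fun_calc_eq_spectral_sum[OF h])
    also have "\<dots> = spectral_sum (F a) (adjoint K (y - yh)) + spectral_sum (F a) (A (spectral_sum g w))"
      by (simp only: linear_add[OF bounded_linear.linear[OF bounded_linear_spectral_sum[OF h]]]
          adjoint_K_mp_inverse[OF yh] x)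
    finally have decomp: "(fun_calc (F a) A \<circ> adjoint K) y
        = spectral_sum (F a) (adjoint K (y - yh)) + spectral_sum (F a) (A (spectral_sum g w))" .
    have "norm ((fun_calc (F a) A \<circ> adjoint K) y - mp_inverse K yh)
        = norm (spectral_sum (F a) (adjoint K (y - yh))
          + (spectral_sum (F a) (A (spectral_sum g w)) - spectral_sum g w))"
      by (simp only: decomp x add_diff_eq)
    also have "\<dots> \<le> norm (spectral_sum (F a) (adjoint K (y - yh)))
          + norm (spectral_sum (F a) (A (spectral_sum g w)) - spectral_sum g w)"
      by (rule norm_triangle_ineq)
    also have "\<dots> \<le> sqrt (C\<^sub>F / a * R) * norm (y - yh) + C\<^sub>\<nu> * a powr (\<nu>/2) * norm w"
    proof (rule add_mono)
      show "norm (spectral_sum (F a) (adjoint K (y - yh))) \<le> sqrt (C\<^sub>F / a * R) * norm (y - yh)"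
        using F[OF a spec] lF[OF a spec] pos a by (intro data_error_le) auto
      show "norm (spectral_sum (F a) (A (spectral_sum g w)) - spectral_sum g w)
          \<le> C\<^sub>\<nu> * a powr (\<nu>/2) * norm w"
        unfolding g_def using source[OF a spec] pos \<open>0 < \<nu>\<close>
        by (intro source_condition_error_le h) auto
    qed
    finally show ?thesis .
  qed
  have "0 \<le> C\<^sub>F * R" "0 \<le> C\<^sub>\<nu>"
    using pos by simp_all
  moreover have "sqrt (C\<^sub>F / a * R) = sqrt (C\<^sub>F * R / a)" for a
    by simp
  ultimately show thesis
    using that linear bound by metis
qed

end

section \<open>Sample means\<close>

context prob_space
begin

lemma identically_distributed_integral:
  fixes f :: "'b::topological_space \<Rightarrow> 'c::{banach,second_countable_topology}"
  assumes "distr M borel X = distr M borel X'"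
    and [measurable]: "X \<in> borel_measurable M" "X' \<in> borel_measurable M" "f \<in> borel_measurable borel"
    and "integrable M (\<lambda>\<omega>. f (X' \<omega>))"
  shows "integrable M (\<lambda>\<omega>. f (X \<omega>))" "(\<integral>\<omega>. f (X \<omega>) \<partial>M) = (\<integral>\<omega>. f (X' \<omega>) \<partial>M)"
proof -
  have "integrable (distr M borel X') f"
    using assms(5) by (subst integrable_distr_eq) auto
  then have "integrable (distr M borel X) f"
    using assms(1) by simp
  then show "integrable M (\<lambda>\<omega>. f (X \<omega>))"
    by (subst (asm) integrable_distr_eq) auto
  have "(\<integral>\<omega>. f (X \<omega>) \<partial>M) = integral\<^sup>L (distr M borel X) f"
    by (rule integral_distr[symmetric]) auto
  also have "\<dots> = (\<integral>\<omega>. f (X' \<omega>) \<partial>M)"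
    unfolding assms(1) by (rule integral_distr) auto
  finally show "(\<integral>\<omega>. f (X \<omega>) \<partial>M) = (\<integral>\<omega>. f (X' \<omega>) \<partial>M)" .
qed

lemma integral_inner_indep_var_centered:
  fixes X Y :: "'a \<Rightarrow> 'b::{real_inner,complete_space,second_countable_topology}"
  assumes indep: "indep_var borel X borel Y"
    and "integrable M (\<lambda>\<omega>. inner (X \<omega> - x) (Y \<omega> - y))"
    and "\<And>c. integrable M (\<lambda>\<omega>. inner c (Y \<omega>))" "\<And>c. (\<integral>\<omega>. inner c (Y \<omega>) \<partial>M) = inner c y"
  shows "(\<integral>\<omega>. inner (X \<omega> - x) (Y \<omega> - y) \<partial>M) = 0"
proof -
  have [measurable]: "X \<in> borel_measurable M" "Y \<in> borel_measurable M"
    using indep unfolding indep_var_distribution_eq by auto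
  define G where "G p = inner (fst p - x) (snd p - y)" for p :: "'b \<times> 'b"
  have G_meas[measurable]: "G \<in> borel_measurable (borel \<Otimes>\<^sub>M borel)"
    unfolding G_def by measurable
  define MX where "MX = distr M borel X"
  define MY where "MY = distr M borel Y"
  interpret MX: prob_space MX
    unfolding MX_def by (rule prob_space_distr) simp
  interpret MY: prob_space MY
    unfolding MY_def by (rule prob_space_distr) simp
  interpret MXY: pair_prob_space MX MY ..
  have prod: "MX \<Otimes>\<^sub>M MY = distr M (borel \<Otimes>\<^sub>M borel) (\<lambda>\<omega>. (X \<omega>, Y \<omega>))"
    using indep unfolding indep_var_distribution_eq MX_def MY_def by blast
  have "(\<integral>\<omega>. inner (X \<omega> - x) (Y \<omega> - y) \<partial>M) = (\<integral>\<omega>. G (X \<omega>, Y \<omega>) \<partial>M)"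
    by (simp add: G_def)
  also have "\<dots> = integral\<^sup>L (MX \<Otimes>\<^sub>M MY) G"
    unfolding prod by (rule integral_distr[symmetric]) auto
  also have "\<dots> = (\<integral>u. (\<integral>v. G (u, v) \<partial>MY) \<partial>MX)"
  proof (rule MXY.integral_fst'[symmetric])
    show "integrable (MX \<Otimes>\<^sub>M MY) G"
      unfolding prod using assms(2) by (subst integrable_distr_eq) (auto simp: G_def)
  qed
  also have "\<dots> = (\<integral>u. 0 \<partial>MX)"
  proof (rule Bochner_Integration.integral_cong[OF refl])
    fix u
    define g where "g v = inner (u - x) v" for v :: 'b
    have [measurable]: "g \<in> borel_measurable borel"
      unfolding g_def by measurable
    have "integrable MY g"
      unfolding MY_def using assms(3)[of "u - x"] by (subst integrable_distr_eq) (auto simp: g_def)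
    moreover have "integral\<^sup>L MY g = inner (u - x) y"
      unfolding MY_def using assms(4)[of "u - x"] by (subst integral_distr) (auto simp: g_def)
    moreover have "(\<integral>v. G (u, v) \<partial>MY) = (\<integral>v. g v - inner (u - x) y \<partial>MY)"
      by (simp add: G_def g_def inner_diff_right)
    ultimately show "(\<integral>v. G (u, v) \<partial>MY) = 0"
      by (simp add: MY.prob_space)
  qed
  finally show ?thesis
    by simp
qed

lemma integrable_norm_diff_square:
  fixes X :: "'a \<Rightarrow> 'b::{real_normed_vector,second_countable_topology}"
  assumes "integrable M (\<lambda>\<omega>. (norm (X \<omega>))\<^sup>2)" "X \<in> borel_measurable M"
  shows "integrable M (\<lambda>\<omega>. (norm (X \<omega> - y))\<^sup>2)"
proof (rule Bochner_Integration.integrable_bound[where f="\<lambda>\<omega>. 2 * (norm (X \<omega>))\<^sup>2 + 2 * (norm y)\<^sup>2"])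
  show "integrable M (\<lambda>\<omega>. 2 * (norm (X \<omega>))\<^sup>2 + 2 * (norm y)\<^sup>2)"
    using assms(1) by simp
  show "AE \<omega> in M. norm ((norm (X \<omega> - y))\<^sup>2) \<le> norm (2 * (norm (X \<omega>))\<^sup>2 + 2 * (norm y)\<^sup>2)"
  proof (intro AE_I2)
    fix \<omega>
    have "(norm (X \<omega> - y))\<^sup>2 \<le> (norm (X \<omega>) + norm y)\<^sup>2"
      using norm_triangle_ineq4[of "X \<omega>" y] by (simp add: power_mono)
    also have "\<dots> \<le> 2 * (norm (X \<omega>))\<^sup>2 + 2 * (norm y)\<^sup>2"
      using sum_squares_ge_zero[of "norm (X \<omega>) - norm y" 0]
      by (simp add: power2_eq_square algebra_simps)
    finally show "norm ((norm (X \<omega> - y))\<^sup>2) \<le> norm (2 * (norm (X \<omega>))\<^sup>2 + 2 * (norm y)\<^sup>2)"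
      by simp
  qed
qed (use assms(2) in measurable)

lemma integrable_inner_of_square:
  fixes X Z :: "'a \<Rightarrow> 'b::{real_inner,second_countable_topology}"
  assumes "integrable M (\<lambda>\<omega>. (norm (X \<omega>))\<^sup>2)" "integrable M (\<lambda>\<omega>. (norm (Z \<omega>))\<^sup>2)"
    and "X \<in> borel_measurable M" "Z \<in> borel_measurable M"
  shows "integrable M (\<lambda>\<omega>. inner (X \<omega>) (Z \<omega>))"
proof (rule Bochner_Integration.integrable_bound[OF Bochner_Integration.integrable_add[OF assms(1,2)]])
  show "AE \<omega> in M. norm (inner (X \<omega>) (Z \<omega>)) \<le> norm ((norm (X \<omega>))\<^sup>2 + (norm (Z \<omega>))\<^sup>2)"
  proof (intro AE_I2)
    fix \<omega>
    have "2 * (norm (X \<omega>) * norm (Z \<omega>)) \<le> (norm (X \<omega>))\<^sup>2 + (norm (Z \<omega>))\<^sup>2"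
      using sum_squares_ge_zero[of "norm (X \<omega>) - norm (Z \<omega>)" 0]
      by (simp add: power2_eq_square algebra_simps)
    moreover have "\<bar>inner (X \<omega>) (Z \<omega>)\<bar> \<le> norm (X \<omega>) * norm (Z \<omega>)"
      by (rule Cauchy_Schwarz_ineq2)
    moreover have "0 \<le> norm (X \<omega>) * norm (Z \<omega>)"
      by simp
    ultimately have "\<bar>inner (X \<omega>) (Z \<omega>)\<bar> \<le> (norm (X \<omega>))\<^sup>2 + (norm (Z \<omega>))\<^sup>2"
      by linarith
    then show "norm (inner (X \<omega>) (Z \<omega>)) \<le> norm ((norm (X \<omega>))\<^sup>2 + (norm (Z \<omega>))\<^sup>2)"
      by simp
  qed
qed (use assms(3,4) in measurable)

lemma sample_mean_mean_square_error:
  fixes Y :: "nat \<Rightarrow> 'a \<Rightarrow> 'b::{real_inner,complete_space,second_countable_topology}"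
  assumes ind: "indep_vars (\<lambda>_. borel) Y UNIV"
    and distr: "\<forall>i. distr M borel (Y i) = distr M borel (Y 0)"
    and "integrable M (Y 0)" "(\<integral>\<omega>. Y 0 \<omega> \<partial>M) = y"
    and "(\<integral>\<^sup>+ \<omega>. ennreal ((norm (Y 0 \<omega>))\<^sup>2) \<partial>M) < \<infinity>"
    and "0 < n"
  shows "integrable M (\<lambda>\<omega>. (norm ((1 / real n) *\<^sub>R (\<Sum>i<n. Y i \<omega>) - y))\<^sup>2)"
    and "(\<integral>\<omega>. (norm ((1 / real n) *\<^sub>R (\<Sum>i<n. Y i \<omega>) - y))\<^sup>2 \<partial>M)
      = (\<integral>\<omega>. (norm (Y 0 \<omega> - y))\<^sup>2 \<partial>M) / real n"
proof -
  define \<sigma>2 where "\<sigma>2 = (\<integral>\<omega>. (norm (Y 0 \<omega> - y))\<^sup>2 \<partial>M)"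
  have [measurable]: "Y i \<in> borel_measurable M" for i
    using ind unfolding indep_vars_def2 by auto
  have "integrable M (\<lambda>\<omega>. (norm (Y 0 \<omega>))\<^sup>2)"
    using assms(5) by (intro integrableI_bounded) auto
  then have "integrable M (\<lambda>\<omega>. (norm (Y 0 \<omega> - y))\<^sup>2)"
    by (rule integrable_norm_diff_square) simp
  then have sq: "integrable M (\<lambda>\<omega>. (norm (Y i \<omega> - y))\<^sup>2)" "(\<integral>\<omega>. (norm (Y i \<omega> - y))\<^sup>2 \<partial>M) = \<sigma>2" for i
    using identically_distributed_integral[where f="\<lambda>v. (norm (v - y))\<^sup>2", OF distr[rule_format, of i]]
    by (auto simp: \<sigma>2_def)
  have "integrable M (\<lambda>\<omega>. inner c (Y 0 \<omega>))" "(\<integral>\<omega>. inner c (Y 0 \<omega>) \<partial>M) = inner c y" for c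
    using assms(3,4) integral_inner_right[of c M "Y 0"]
    by (auto intro: integrable_bounded_linear[OF bounded_linear_inner_right])
  then have lin: "integrable M (\<lambda>\<omega>. inner c (Y i \<omega>))" "(\<integral>\<omega>. inner c (Y i \<omega>) \<partial>M) = inner c y" for i c
    using identically_distributed_integral[where f="inner c", OF distr[rule_format, of i]] by auto
  have cross_integrable: "integrable M (\<lambda>\<omega>. inner (Y i \<omega> - y) (Y j \<omega> - y))" for i j
    by (rule integrable_inner_of_square[OF sq(1)[of i] sq(1)[of j]]) measurable
  have cross: "(\<integral>\<omega>. inner (Y i \<omega> - y) (Y j \<omega> - y) \<partial>M) = (if i = j then \<sigma>2 else 0)" for i j
  proof (cases "i = j")
    case False
    have "indep_var borel ((\<lambda>f. f i) \<circ> (\<lambda>\<omega>. restrict (\<lambda>k. Y k \<omega>) {i}))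
        borel ((\<lambda>f. f j) \<circ> (\<lambda>\<omega>. restrict (\<lambda>k. Y k \<omega>) {j}))"
      using False by (intro indep_var_compose[OF indep_var_restrict[OF ind]]) auto
    then have "indep_var borel (Y i) borel (Y j)"
      by (simp add: comp_def)
    then show ?thesis
      using False integral_inner_indep_var_centered[OF _ cross_integrable lin] by simp
  qed (use sq(2) in \<open>simp add: power2_norm_eq_inner\<close>)
  \<comment> \<open>Expanding the square of the centred sum, only the n diagonal terms survive.\<close>
  define S where "S \<omega> = (\<Sum>i<n. Y i \<omega> - y)" for \<omega>
  have S_sq: "(norm (S \<omega>))\<^sup>2 = (\<Sum>j<n. \<Sum>i<n. inner (Y i \<omega> - y) (Y j \<omega> - y))" for \<omega>
    by (simp add: S_def power2_norm_eq_inner inner_sum_left inner_sum_right)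
  have S_int: "integrable M (\<lambda>\<omega>. (norm (S \<omega>))\<^sup>2)"
    unfolding S_sq by (intro Bochner_Integration.integrable_sum cross_integrable)
  have "(\<integral>\<omega>. (norm (S \<omega>))\<^sup>2 \<partial>M) = real n * \<sigma>2"
    unfolding S_sq using cross_integrable
    by (simp add: Bochner_Integration.integral_sum Bochner_Integration.integrable_sum cross)
  moreover have "(norm ((1 / real n) *\<^sub>R (\<Sum>i<n. Y i \<omega>) - y))\<^sup>2 = (1 / real n)\<^sup>2 * (norm (S \<omega>))\<^sup>2" for \<omega>
  proof -
    have "S \<omega> = (\<Sum>i<n. Y i \<omega>) - real n *\<^sub>R y"
      by (simp add: S_def sum_subtractf sum_constant_scaleR)
    then have "(1 / real n) *\<^sub>R (\<Sum>i<n. Y i \<omega>) - y = (1 / real n) *\<^sub>R S \<omega>"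
      using \<open>0 < n\<close> by (simp add: scaleR_diff_right)
    then show ?thesis
      by (simp only: norm_scaleR power_mult_distrib power2_abs)
  qed
  ultimately show "integrable M (\<lambda>\<omega>. (norm ((1 / real n) *\<^sub>R (\<Sum>i<n. Y i \<omega>) - y))\<^sup>2)"
    and "(\<integral>\<omega>. (norm ((1 / real n) *\<^sub>R (\<Sum>i<n. Y i \<omega>) - y))\<^sup>2 \<partial>M) = \<sigma>2 / real n"
    using S_int \<open>0 < n\<close> by (simp_all add: power2_eq_square)
qed

lemma mean_square_le_of_norm_le:
  fixes X :: "'a \<Rightarrow> 'b::real_normed_vector" and D :: "'a \<Rightarrow> 'c::real_normed_vector"
  assumes "integrable M (\<lambda>\<omega>. (norm (D \<omega>))\<^sup>2)" "(\<lambda>\<omega>. (norm (X \<omega>))\<^sup>2) \<in> borel_measurable M"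
    and "\<And>\<omega>. norm (X \<omega>) \<le> s * norm (D \<omega>) + b" "0 \<le> s" "0 \<le> b"
  shows "(\<integral>\<^sup>+ \<omega>. ennreal ((norm (X \<omega>))\<^sup>2) \<partial>M) < \<infinity>"
    and "(\<integral>\<omega>. (norm (X \<omega>))\<^sup>2 \<partial>M) \<le> 2 * s\<^sup>2 * (\<integral>\<omega>. (norm (D \<omega>))\<^sup>2 \<partial>M) + 2 * b\<^sup>2"
proof -
  have pointwise: "(norm (X \<omega>))\<^sup>2 \<le> 2 * s\<^sup>2 * (norm (D \<omega>))\<^sup>2 + 2 * b\<^sup>2" for \<omega>
  proof -
    have "(norm (X \<omega>))\<^sup>2 \<le> (s * norm (D \<omega>) + b)\<^sup>2"
      using assms(3)[of \<omega>] by (simp add: power_mono)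
    also have "\<dots> \<le> 2 * s\<^sup>2 * (norm (D \<omega>))\<^sup>2 + 2 * b\<^sup>2"
      using sum_squares_ge_zero[of "s * norm (D \<omega>) - b" 0]
      by (simp add: power2_eq_square algebra_simps)
    finally show ?thesis .
  qed
  have bound_int: "integrable M (\<lambda>\<omega>. 2 * s\<^sup>2 * (norm (D \<omega>))\<^sup>2 + 2 * b\<^sup>2)"
    using assms(1) by simp
  have X_int: "integrable M (\<lambda>\<omega>. (norm (X \<omega>))\<^sup>2)"
    using bound_int assms(2) by (rule Bochner_Integration.integrable_bound) (simp add: pointwise)
  then show "(\<integral>\<^sup>+ \<omega>. ennreal ((norm (X \<omega>))\<^sup>2) \<partial>M) < \<infinity>"
    by (simp add: nn_integral_eq_integral)
  have "(\<integral>\<omega>. (norm (X \<omega>))\<^sup>2 \<partial>M) \<le> (\<integral>\<omega>. 2 * s\<^sup>2 * (norm (D \<omega>))\<^sup>2 + 2 * b\<^sup>2 \<partial>M)"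
    by (rule integral_mono[OF X_int bound_int pointwise])
  also have "\<dots> = 2 * s\<^sup>2 * (\<integral>\<omega>. (norm (D \<omega>))\<^sup>2 \<partial>M) + 2 * b\<^sup>2"
    using assms(1) by (simp add: prob_space)
  finally show "(\<integral>\<omega>. (norm (X \<omega>))\<^sup>2 \<partial>M) \<le> 2 * s\<^sup>2 * (\<integral>\<omega>. (norm (D \<omega>))\<^sup>2 \<partial>M) + 2 * b\<^sup>2" .
qed


lemma sample_mean_estimator_mean_square_le:
  fixes Y :: "nat \<Rightarrow> 'a \<Rightarrow> 'b::{real_inner,complete_space,second_countable_topology}"
    and T :: "'b \<Rightarrow> 'c::{real_normed_vector,second_countable_topology}"
  assumes "indep_vars (\<lambda>_. borel) Y UNIV" "\<forall>i. distr M borel (Y i) = distr M borel (Y 0)"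
    and "integrable M (Y 0)" "(\<integral>\<omega>. Y 0 \<omega> \<partial>M) = y"
    and "(\<integral>\<^sup>+ \<omega>. ennreal ((norm (Y 0 \<omega>))\<^sup>2) \<partial>M) < \<infinity>" "0 < n"
    and [measurable]: "T \<in> borel_measurable borel"
    and T: "\<And>v. norm (T v - x) \<le> s * norm (v - y) + b" "0 \<le> s" "0 \<le> b"
  shows "(\<integral>\<^sup>+ \<omega>. ennreal ((norm (T ((1 / real n) *\<^sub>R (\<Sum>i<n. Y i \<omega>)) - x))\<^sup>2) \<partial>M) < \<infinity>"
    and "(\<integral>\<omega>. (norm (T ((1 / real n) *\<^sub>R (\<Sum>i<n. Y i \<omega>)) - x))\<^sup>2 \<partial>M)
      \<le> 2 * s\<^sup>2 * ((\<integral>\<omega>. (norm (Y 0 \<omega> - y))\<^sup>2 \<partial>M) / real n) + 2 * b\<^sup>2"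
proof -
  have [measurable]: "Y i \<in> borel_measurable M" for i
    using assms(1) unfolding indep_vars_def2 by auto
  note sample_mean = sample_mean_mean_square_error[OF assms(1-6)]
  have "(\<lambda>\<omega>. (norm (T ((1 / real n) *\<^sub>R (\<Sum>i<n. Y i \<omega>)) - x))\<^sup>2) \<in> borel_measurable M"
    by measurable
  note mean_square = mean_square_le_of_norm_le[OF sample_mean(1) this T]
  show "(\<integral>\<^sup>+ \<omega>. ennreal ((norm (T ((1 / real n) *\<^sub>R (\<Sum>i<n. Y i \<omega>)) - x))\<^sup>2) \<partial>M) < \<infinity>"
    by (rule mean_square(1))
  show "(\<integral>\<omega>. (norm (T ((1 / real n) *\<^sub>R (\<Sum>i<n. Y i \<omega>)) - x))\<^sup>2 \<partial>M)
      \<le> 2 * s\<^sup>2 * ((\<integral>\<omega>. (norm (Y 0 \<omega> - y))\<^sup>2 \<partial>M) / real n) + 2 * b\<^sup>2"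
    using mean_square(2) unfolding sample_mean(2) .
qed

end

section \<open>A priori parameter choice\<close>

lemma powr_square:
  fixes x e :: real
  assumes "0 < x"
  shows "(x powr e)\<^sup>2 = x powr (2 * e)"
proof -
  have "(x powr e)\<^sup>2 = (x powr e) powr 2"
    using assms by (simp add: powr_numeral)
  also have "\<dots> = x powr (2 * e)"
    by (simp add: powr_powr mult.commute)
  finally show ?thesis .
qed

lemma a_priori_rate_identities:
  fixes \<delta> \<rho> \<nu> :: real
  assumes "0 < \<delta>" "0 < \<rho>" "0 < \<nu>"
  defines "q \<equiv> (\<delta> / \<rho>) powr (2 / (\<nu> + 1))"
    and "Z \<equiv> (\<delta> powr (\<nu> / (\<nu> + 1)) * \<rho> powr (1 / (\<nu> + 1)))\<^sup>2"
  shows "\<delta>\<^sup>2 / q = Z" and "q powr \<nu> * \<rho>\<^sup>2 = Z"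
proof -
  have Z: "Z = \<delta> powr (2 * \<nu> / (\<nu> + 1)) * \<rho> powr (2 / (\<nu> + 1))"
    unfolding Z_def power_mult_distrib using assms(1,2) by (simp add: powr_square)
  have \<delta>2: "\<delta>\<^sup>2 = \<delta> powr 2" and \<rho>2: "\<rho>\<^sup>2 = \<rho> powr 2"
    using assms(1,2) by (simp_all add: powr_numeral)
  have "\<delta>\<^sup>2 / q = (\<delta> powr 2 / \<delta> powr (2 / (\<nu> + 1))) * \<rho> powr (2 / (\<nu> + 1))"
    unfolding q_def \<delta>2 powr_divide by simp
  also have "\<delta> powr 2 / \<delta> powr (2 / (\<nu> + 1)) = \<delta> powr (2 * \<nu> / (\<nu> + 1))"
  proof -
    have "2 - 2 / (\<nu> + 1) = 2 * \<nu> / (\<nu> + 1)"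
      using assms(3) by (simp add: field_simps)
    then show ?thesis
      by (simp only: powr_diff[symmetric])
  qed
  finally show "\<delta>\<^sup>2 / q = Z"
    by (simp add: Z)
  have "q powr \<nu> = \<delta> powr (2 * \<nu> / (\<nu> + 1)) / \<rho> powr (2 * \<nu> / (\<nu> + 1))"
    unfolding q_def powr_powr by (simp add: powr_divide)
  moreover have "\<rho> powr 2 / \<rho> powr (2 * \<nu> / (\<nu> + 1)) = \<rho> powr (2 / (\<nu> + 1))"
  proof -
    have "2 - 2 * \<nu> / (\<nu> + 1) = 2 / (\<nu> + 1)"
      using assms(3) by (simp add: field_simps)
    then show ?thesis
      by (simp only: powr_diff[symmetric])
  qed
  ultimately have "q powr \<nu> * \<rho> powr 2 = \<delta> powr (2 * \<nu> / (\<nu> + 1)) * \<rho> powr (2 / (\<nu> + 1))"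
    by (metis times_divide_eq_left times_divide_eq_right)
  then show "q powr \<nu> * \<rho>\<^sup>2 = Z"
    unfolding \<rho>2 Z .
qed

lemma a_priori_choice_error_le:
  fixes \<delta> \<rho> \<nu> c C a V B :: real
  assumes "0 < \<delta>" "0 < \<rho>" "0 < \<nu>" "0 < c" "0 \<le> V" "0 \<le> B"
    and a: "c * (\<delta> / \<rho>) powr (2 / (\<nu> + 1)) \<le> a" "a \<le> C * (\<delta> / \<rho>) powr (2 / (\<nu> + 1))"
  shows "V / a * \<delta>\<^sup>2 + B * a powr \<nu> * \<rho>\<^sup>2
    \<le> (V / c + B * C powr \<nu>) * (\<delta> powr (\<nu> / (\<nu> + 1)) * \<rho> powr (1 / (\<nu> + 1)))\<^sup>2"
proof -
  define q where "q = (\<delta> / \<rho>) powr (2 / (\<nu> + 1))"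
  note ids = a_priori_rate_identities[OF assms(1-3), folded q_def]
  have "0 < q"
    using assms(1,2) by (simp add: q_def)
  have a': "c * q \<le> a" "a \<le> C * q"
    using a by (simp_all add: q_def)
  have "0 < c * q"
    by (rule mult_pos_pos[OF assms(4) \<open>0 < q\<close>])
  then have "0 < a"
    using a'(1) by linarith
  then have "0 < C * q"
    using a'(2) by linarith
  then have "0 \<le> C"
    using \<open>0 < q\<close> by (simp add: zero_less_mult_iff)
  have "V / a \<le> V / (c * q)"
    by (rule divide_left_mono[OF a'(1) assms(5)]) (use \<open>0 < a\<close> \<open>0 < c * q\<close> in simp)
  then have "V / a * \<delta>\<^sup>2 \<le> V / (c * q) * \<delta>\<^sup>2"
    by (rule mult_right_mono) simp
  also have "\<dots> = V / c * (\<delta>\<^sup>2 / q)"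
    by simp
  finally have variance: "V / a * \<delta>\<^sup>2 \<le> V / c * (\<delta>\<^sup>2 / q)" .
  have "a powr \<nu> \<le> (C * q) powr \<nu>"
    by (rule powr_mono2) (use assms(3) \<open>0 < a\<close> a'(2) in auto)
  also have "\<dots> = C powr \<nu> * q powr \<nu>"
    using \<open>0 \<le> C\<close> \<open>0 < q\<close> by (simp add: powr_mult)
  finally have "a powr \<nu> * \<rho>\<^sup>2 \<le> (C powr \<nu> * q powr \<nu>) * \<rho>\<^sup>2"
    by (rule mult_right_mono) simp
  then have "B * (a powr \<nu> * \<rho>\<^sup>2) \<le> B * ((C powr \<nu> * q powr \<nu>) * \<rho>\<^sup>2)"
    by (rule mult_left_mono) (rule assms(6))
  then have bias: "B * a powr \<nu> * \<rho>\<^sup>2 \<le> B * C powr \<nu> * (q powr \<nu> * \<rho>\<^sup>2)"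
    by (simp only: mult.assoc)
  have "V / a * \<delta>\<^sup>2 + B * a powr \<nu> * \<rho>\<^sup>2 \<le> V / c * (\<delta>\<^sup>2 / q) + B * C powr \<nu> * (q powr \<nu> * \<rho>\<^sup>2)"
    by (rule add_mono[OF variance bias])
  also have "\<dots> = (V / c + B * C powr \<nu>) * (\<delta> powr (\<nu> / (\<nu> + 1)) * \<rho> powr (1 / (\<nu> + 1)))\<^sup>2"
    unfolding ids by (rule distrib_right[symmetric])
  finally show ?thesis .
qed

lemma a_priori_choice_rate:
  fixes n :: nat and \<rho> \<nu> c C a V B E :: real
  assumes "1 \<le> n" "0 < \<rho>" "0 < \<nu>" "0 < c" "0 \<le> V" "0 \<le> B"
    and a: "c * (real n powr (-1/2) / \<rho>) powr (2/(\<nu>+1)) \<le> a"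
      "a \<le> C * (real n powr (-1/2) / \<rho>) powr (2/(\<nu>+1))"
    and E: "E \<le> V / a / real n + B * (a powr (\<nu>/2) * \<rho>)\<^sup>2"
  shows "sqrt E \<le> sqrt (V / c + B * C powr \<nu>) * (real n powr (-1/2)) powr (\<nu>/(\<nu>+1)) * \<rho> powr (1/(\<nu>+1))"
proof -
  define \<delta> where "\<delta> = real n powr (-1/2)"
  have "0 < \<delta>"
    using assms(1) by (simp add: \<delta>_def)
  have "\<delta>\<^sup>2 = real n powr (2 * (-1/2))"
    unfolding \<delta>_def using assms(1) by (intro powr_square) simp
  then have "\<delta>\<^sup>2 = 1 / real n"
    using assms(1) by (simp add: powr_neg_one)
  have "0 < c * (\<delta> / \<rho>) powr (2/(\<nu>+1))"
    using \<open>0 < \<delta>\<close> assms(2,4) by simp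
  then have "0 < a"
    using a(1) by (simp add: \<delta>_def)
  have "E \<le> V / a * \<delta>\<^sup>2 + B * a powr \<nu> * \<rho>\<^sup>2"
    using E \<open>\<delta>\<^sup>2 = 1 / real n\<close> \<open>0 < a\<close> by (simp add: power_mult_distrib powr_square)
  also have "\<dots> \<le> (V / c + B * C powr \<nu>) * (\<delta> powr (\<nu> / (\<nu> + 1)) * \<rho> powr (1 / (\<nu> + 1)))\<^sup>2"
    by (rule a_priori_choice_error_le[OF \<open>0 < \<delta>\<close> assms(2-6) a[folded \<delta>_def]])
  finally have "sqrt E \<le> sqrt ((V / c + B * C powr \<nu>) * (\<delta> powr (\<nu> / (\<nu> + 1)) * \<rho> powr (1 / (\<nu> + 1)))\<^sup>2)"
    by (rule real_sqrt_le_mono)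
  also have "\<dots> = sqrt (V / c + B * C powr \<nu>) * (\<delta> powr (\<nu> / (\<nu> + 1)) * \<rho> powr (1 / (\<nu> + 1)))"
    by (simp add: real_sqrt_mult abs_mult)
  finally show ?thesis
    by (simp add: \<delta>_def mult.assoc)
qed

lemma a_priori_choice_convergence_rate:
  fixes P :: "real \<Rightarrow> nat \<Rightarrow> bool" and E :: "real \<Rightarrow> nat \<Rightarrow> real"
  assumes "0 < \<rho>" "0 < \<nu>" "0 < c" "0 \<le> V" "0 \<le> B"
    and choice: "\<forall>n::nat. n \<ge> 1 \<longrightarrow>
      c * (real n powr (-1/2) / \<rho>) powr (2/(\<nu>+1)) \<le> \<alpha> (real n powr (-1/2)) \<and>
      \<alpha> (real n powr (-1/2)) \<le> C * (real n powr (-1/2) / \<rho>) powr (2/(\<nu>+1))"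
    and error: "\<And>a n. 0 < a \<Longrightarrow> 0 < n \<Longrightarrow> P a n \<and> E a n \<le> V / a / real n + B * (a powr (\<nu>/2) * \<rho>)\<^sup>2"
  shows "\<exists>C'. \<forall>n::nat. n \<ge> 1 \<longrightarrow> P (\<alpha> (real n powr (-1/2))) n \<and>
    sqrt (E (\<alpha> (real n powr (-1/2))) n) \<le> C' * (real n powr (-1/2)) powr (\<nu>/(\<nu>+1)) * \<rho> powr (1/(\<nu>+1))"
proof (intro exI[of _ "sqrt (V / c + B * C powr \<nu>)"] allI impI)
  fix n :: nat
  assume "1 \<le> n"
  let ?a = "\<alpha> (real n powr (-1/2))"
  have a: "c * (real n powr (-1/2) / \<rho>) powr (2/(\<nu>+1)) \<le> ?a"
      "?a \<le> C * (real n powr (-1/2) / \<rho>) powr (2/(\<nu>+1))"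
    using choice \<open>1 \<le> n\<close> by blast+
  moreover have "0 < c * (real n powr (-1/2) / \<rho>) powr (2/(\<nu>+1))"
    using assms(1,3) \<open>1 \<le> n\<close> by simp
  ultimately have "0 < ?a"
    by linarith
  moreover have "0 < n"
    using \<open>1 \<le> n\<close> by simp
  ultimately have "P ?a n" and "E ?a n \<le> V / ?a / real n + B * (?a powr (\<nu>/2) * \<rho>)\<^sup>2"
    using error by blast+
  then show "P ?a n \<and> sqrt (E ?a n)
      \<le> sqrt (V / c + B * C powr \<nu>) * (real n powr (-1/2)) powr (\<nu>/(\<nu>+1)) * \<rho> powr (1/(\<nu>+1))"
    using a_priori_choice_rate[OF \<open>1 \<le> n\<close> assms(1-5) a] by blast
qed

lemma regularised_sample_mean_error_le:
  fixes K :: "'x::{real_inner,complete_space,second_countable_topology} \<Rightarrow>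
      'y::{real_inner,complete_space,second_countable_topology}"
    and M :: "'w measure" and Y :: "nat \<Rightarrow> 'w \<Rightarrow> 'y"
  assumes "compact_op K" "prob_space M"
    and "prob_space.indep_vars M (\<lambda>_. borel) Y UNIV" "\<forall>i. distr M borel (Y i) = distr M borel (Y 0)"
    and "integrable M (Y 0)" "integral\<^sup>L M (Y 0) = yhat" "yhat \<in> mp_domain K"
    and "(\<integral>\<^sup>+ \<omega>. ennreal ((norm (Y 0 \<omega>))\<^sup>2) \<partial>M) < \<infinity>"
    and "regularising_filter F ((onorm K)\<^sup>2) \<nu>\<^sub>0" "0 < \<nu>" "ereal \<nu> \<le> \<nu>\<^sub>0"
    and w: "mp_inverse K yhat = fun_calc (\<lambda>l. l powr (\<nu>/2)) (adjoint K \<circ> K) w" "norm w \<le> \<rho>"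
  obtains V B where "0 \<le> V" "0 \<le> B"
    and "\<And>a n. 0 < a \<Longrightarrow> 0 < n \<Longrightarrow>
      (\<integral>\<^sup>+ \<omega>. ennreal ((norm ((fun_calc (F a) (adjoint K \<circ> K) \<circ> adjoint K)
          ((1 / real n) *\<^sub>R (\<Sum>i<n. Y i \<omega>)) - mp_inverse K yhat))\<^sup>2) \<partial>M) < \<infinity> \<and>
      (\<integral>\<omega>. (norm ((fun_calc (F a) (adjoint K \<circ> K) \<circ> adjoint K)
          ((1 / real n) *\<^sub>R (\<Sum>i<n. Y i \<omega>)) - mp_inverse K yhat))\<^sup>2 \<partial>M)
        \<le> V / a / real n + B * (a powr (\<nu>/2) * \<rho>)\<^sup>2"
proof -
  interpret compact_operator K
    by unfold_locales fact
  interpret prob_space M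
    by fact
  define \<sigma>2 where "\<sigma>2 = (\<integral>\<omega>. (norm (Y 0 \<omega> - yhat))\<^sup>2 \<partial>M)"
  have "0 \<le> \<sigma>2" "0 \<le> \<rho>"
    using w(2) norm_ge_zero[of w] unfolding \<sigma>2_def by (simp, linarith)
  show thesis
  proof (rule regularisation_error_le[OF assms(9-11)])
    fix C\<^sub>1 C\<^sub>2
    assume C: "0 \<le> C\<^sub>1" "0 \<le> C\<^sub>2"
      and linear: "\<And>a. 0 < a \<Longrightarrow> bounded_linear (fun_calc (F a) A \<circ> adjoint K)"
      and error: "\<And>a y yh w. 0 < a \<Longrightarrow> yh \<in> mp_domain K \<Longrightarrow>
        mp_inverse K yh = fun_calc (\<lambda>l. l powr (\<nu>/2)) A w \<Longrightarrow>
        norm ((fun_calc (F a) A \<circ> adjoint K) y - mp_inverse K yh)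
          \<le> sqrt (C\<^sub>1 / a) * norm (y - yh) + C\<^sub>2 * a powr (\<nu>/2) * norm w"
    have "(\<integral>\<^sup>+ \<omega>. ennreal ((norm ((fun_calc (F a) A \<circ> adjoint K)
          ((1 / real n) *\<^sub>R (\<Sum>i<n. Y i \<omega>)) - mp_inverse K yhat))\<^sup>2) \<partial>M) < \<infinity> \<and>
      (\<integral>\<omega>. (norm ((fun_calc (F a) A \<circ> adjoint K)
          ((1 / real n) *\<^sub>R (\<Sum>i<n. Y i \<omega>)) - mp_inverse K yhat))\<^sup>2 \<partial>M)
        \<le> (2 * C\<^sub>1 * \<sigma>2) / a / real n + (2 * C\<^sub>2\<^sup>2) * (a powr (\<nu>/2) * \<rho>)\<^sup>2"
      if "0 < a" "0 < n" for a n
    proof -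
      have nonneg: "0 \<le> sqrt (C\<^sub>1 / a)" "0 \<le> C\<^sub>2 * a powr (\<nu>/2) * \<rho>"
        using \<open>0 < a\<close> C \<open>0 \<le> \<rho>\<close> by simp_all
      have measurable: "fun_calc (F a) A \<circ> adjoint K \<in> borel_measurable borel"
        using linear[OF \<open>0 < a\<close>] by (intro borel_measurable_continuous_onI linear_continuous_on)
      have bound: "norm ((fun_calc (F a) A \<circ> adjoint K) v - mp_inverse K yhat)
          \<le> sqrt (C\<^sub>1 / a) * norm (v - yhat) + C\<^sub>2 * a powr (\<nu>/2) * \<rho>" for v
        using error[OF \<open>0 < a\<close> assms(7) w(1)] mult_left_mono[OF w(2), of "C\<^sub>2 * a powr (\<nu>/2)"] C
        by (smt (verit) powr_ge_zero zero_le_mult_iff)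
      show ?thesis
        using sample_mean_estimator_mean_square_le[OF assms(3-6,8) \<open>0 < n\<close> measurable bound nonneg]
          C \<open>0 < a\<close> by (simp add: \<sigma>2_def power_mult_distrib)
    qed
    moreover have "0 \<le> 2 * C\<^sub>1 * \<sigma>2" "0 \<le> 2 * C\<^sub>2\<^sup>2"
      using C \<open>0 \<le> \<sigma>2\<close> by simp_all
    ultimately show thesis
      using that by blast
  qed
qed

theorem theorem2:
  fixes K :: "'x::{real_inner, complete_space, second_countable_topology} \<Rightarrow>
              'y::{real_inner, complete_space, second_countable_topology}"
    and M :: "'w measure"
    and Y :: "nat \<Rightarrow> 'w \<Rightarrow> 'y"
    and yhat :: 'y
    and F :: "real \<Rightarrow> real \<Rightarrow> real"
    and \<nu>\<^sub>0 :: ereal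
    and \<nu> \<rho> c C :: real
    and \<alpha> :: "real \<Rightarrow> real"
  assumes "compact_op K"
    and "prob_space M"
    and "prob_space.indep_vars M (\<lambda>_. borel) Y UNIV"
    and "\<forall>i. distr M borel (Y i) = distr M borel (Y 0)"
    and "integrable M (Y 0)" and "integral\<^sup>L M (Y 0) = yhat"
    and "yhat \<in> mp_domain K"
    and "0 < (\<integral>\<^sup>+ \<omega>. ennreal ((norm (Y 0 \<omega>))\<^sup>2) \<partial>M)"
    and "(\<integral>\<^sup>+ \<omega>. ennreal ((norm (Y 0 \<omega>))\<^sup>2) \<partial>M) < \<infinity>"
    and "regularising_filter F ((onorm K)\<^sup>2) \<nu>\<^sub>0"
    and "0 < \<nu>" and "ereal \<nu> \<le> \<nu>\<^sub>0" and "0 < \<rho>"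
    and "\<exists>w. mp_inverse K yhat = fun_calc (\<lambda>l. l powr (\<nu>/2)) (adjoint K \<circ> K) w \<and> norm w \<le> \<rho>"
    and "0 < c" and "c \<le> C"
    and "\<forall>n::nat. n \<ge> 1 \<longrightarrow>
           c * (real n powr (-1/2) / \<rho>) powr (2/(\<nu>+1)) \<le> \<alpha> (real n powr (-1/2)) \<and>
           \<alpha> (real n powr (-1/2)) \<le> C * (real n powr (-1/2) / \<rho>) powr (2/(\<nu>+1))"
  shows "\<exists>C'. \<forall>n::nat. n \<ge> 1 \<longrightarrow>
     (\<integral>\<^sup>+ \<omega>. ennreal ((norm (
         (fun_calc (F (\<alpha> (real n powr (-1/2)))) (adjoint K \<circ> K) \<circ> adjoint K)
            ((1 / real n) *\<^sub>R (\<Sum>i<n. Y i \<omega>))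
         - mp_inverse K yhat))\<^sup>2) \<partial>M) < \<infinity> \<and>
     sqrt (\<integral>\<omega>. (norm (
         (fun_calc (F (\<alpha> (real n powr (-1/2)))) (adjoint K \<circ> K) \<circ> adjoint K)
            ((1 / real n) *\<^sub>R (\<Sum>i<n. Y i \<omega>))
         - mp_inverse K yhat))\<^sup>2 \<partial>M)
       \<le> C' * (real n powr (-1/2)) powr (\<nu>/(\<nu>+1)) * \<rho> powr (1/(\<nu>+1))"
proof -
  obtain w where w: "mp_inverse K yhat = fun_calc (\<lambda>l. l powr (\<nu>/2)) (adjoint K \<circ> K) w" "norm w \<le> \<rho>"
    using assms(14) by blast
  obtain V B where VB: "0 \<le> V" "0 \<le> B" and error: "\<And>a n. 0 < a \<Longrightarrow> 0 < n \<Longrightarrow>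
      (\<integral>\<^sup>+ \<omega>. ennreal ((norm ((fun_calc (F a) (adjoint K \<circ> K) \<circ> adjoint K)
          ((1 / real n) *\<^sub>R (\<Sum>i<n. Y i \<omega>)) - mp_inverse K yhat))\<^sup>2) \<partial>M) < \<infinity> \<and>
      (\<integral>\<omega>. (norm ((fun_calc (F a) (adjoint K \<circ> K) \<circ> adjoint K)
          ((1 / real n) *\<^sub>R (\<Sum>i<n. Y i \<omega>)) - mp_inverse K yhat))\<^sup>2 \<partial>M)
        \<le> V / a / real n + B * (a powr (\<nu>/2) * \<rho>)\<^sup>2"
    by (rule regularised_sample_mean_error_le[OF assms(1-7,9-12) w]) (rule that)
  show ?thesis
    by (rule a_priori_choice_convergence_rate[OF assms(13,11,15) VB assms(17) error])
qed

end
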